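(* Fix $\lambda>0$ and suppose some kernel $P_{Y^*|X}$ attains the infimum $F(\lambda)=\inf_{P_{Y|X}}\{I(X;Y)+\lambda\mathbb E[\mathsf d(X,Y)]\}$, with output distribution $P_{Y^*}$. Let $P_{Y_0}$ satisfy $D(P_{Y^*}\|P_{Y_0})<\infty$ and run the generalized Blahut iteration from $P_{Y_0}$. Then $(F_k(\lambda))_{k\ge1}$ is non-increasing, converges to $F(\lambda)$, and for every $k\ge1$ $$F_k(\lambda)-F(\lambda)\le\frac{D(P_{Y^*}\|P_{Y_0})}{k}.$$
   Context: $X$ has law $P_X$ on a measurable space $\mathcal X$; $\mathsf d\colon\mathcal X\times\mathcal Y\to[0,\infty)$ is a measurable distortion measure (all $\sigma$-algebras containing singletons). Generalized Blahut iteration: given a probability measure $P_{Y_0}$ on $\mathcal Y$, for $k=1,2,\dots$ set $\Sigma_{k-1}(x)=\mathbb E[\exp(-\lambda\mathsf d(x,Y_{k-1}))]$ with $Y_{k-1}\sim P_{Y_{k-1}}$; define the kernel $P_{Y_k|X}$ by $\frac{dP_{Y_k|X=x}}{dP_{Y_{k-1}}}(y)=\frac{\exp(-\lambda\mathsf d(x,y))}{\Sigma_{k-1}(x)}$; this kernel attains $F_k(\lambda)=\min_{P_{Y|X}}\{D(P_{Y|X}\|P_{Y_{k-1}}|P_X)+\lambda\mathbb E[\mathsf d(X,Y)]\}=\mathbb E[\log\frac1{\Sigma_{k-1}(X)}]$; and let $P_{Y_k}$ be the $\mathcal Y$-marginal of $P_XP_{Y_k|X}$. Here $D(P_{Y|X}\|Q|P_X)=\int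 D(P_{Y|X=x}\|Q)\,dP_X(x)$ is conditional relative entropy. Logarithms natural. *)

theory Defs
  imports "HOL-Probability.Probability"
begin

text \<open>Relative entropy D(P||Q) (natural log), valued in extended reals:
  infinite unless P is absolutely continuous w.r.t. Q; otherwise
  the integral of log(dP/dQ) w.r.t. P, split into positive and negative parts
  (the negative part is finite for probability measures).\<close>
definition rel_entropy :: "'b measure \<Rightarrow> 'b measure \<Rightarrow> ereal" where
  "rel_entropy P Q =
     (if sets P = sets Q \<and> absolutely_continuous Q P
      then enn2ereal (\<integral>\<^sup>+ y. ennreal (ln (enn2real (RN_deriv Q P y))) \<partial>P)
         - enn2ereal (\<integral>\<^sup>+ y. ennreal (- ln (enn2real (RN_deriv Q P y))) \<partial>P)
      else \<infinity>)"

definition cond_rel_entropy ::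
  "'a measure \<Rightarrow> ('a \<Rightarrow> 'b measure) \<Rightarrow> 'b measure \<Rightarrow> ereal" where
  "cond_rel_entropy P K Q = enn2ereal (\<integral>\<^sup>+ x. e2ennreal (rel_entropy (K x) Q) \<partial>P)"

definition joint_law :: "'a measure \<Rightarrow> 'b measure \<Rightarrow> ('a \<Rightarrow> 'b measure) \<Rightarrow> ('a \<times> 'b) measure" where
  "joint_law P MY K = bind P (\<lambda>x. distr (K x) (P \<Otimes>\<^sub>M MY) (\<lambda>y. (x, y)))"

definition output_law :: "'a measure \<Rightarrow> ('a \<Rightarrow> 'b measure) \<Rightarrow> 'b measure" where
  "output_law P K = bind P K"

definition mutual_info :: "'a measure \<Rightarrow> 'b measure \<Rightarrow> ('a \<Rightarrow> 'b measure) \<Rightarrow> ereal" where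
  "mutual_info P MY K = rel_entropy (joint_law P MY K) (P \<Otimes>\<^sub>M output_law P K)"

definition exp_distortion :: "'a measure \<Rightarrow> ('a \<Rightarrow> 'b measure) \<Rightarrow> ('a \<Rightarrow> 'b \<Rightarrow> real) \<Rightarrow> ereal" where
  "exp_distortion P K d = enn2ereal (\<integral>\<^sup>+ x. (\<integral>\<^sup>+ y. ennreal (d x y) \<partial>K x) \<partial>P)"

definition rd_F :: "'a measure \<Rightarrow> 'b measure \<Rightarrow> ('a \<Rightarrow> 'b \<Rightarrow> real) \<Rightarrow> real \<Rightarrow> ereal" where
  "rd_F P MY d lam = (INF K \<in> P \<rightarrow>\<^sub>M prob_algebra MY.
       mutual_info P MY K + ereal lam * exp_distortion P K d)"

definition blahut_sigma :: "('a \<Rightarrow> 'b \<Rightarrow> real) \<Rightarrow> real \<Rightarrow> 'b measure \<Rightarrow> 'a \<Rightarrow> real" where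
  "blahut_sigma d lam Q x = (\<integral> y. exp (- lam * d x y) \<partial>Q)"

definition blahut_kernel :: "('a \<Rightarrow> 'b \<Rightarrow> real) \<Rightarrow> real \<Rightarrow> 'b measure \<Rightarrow> 'a \<Rightarrow> 'b measure" where
  "blahut_kernel d lam Q x =
     density Q (\<lambda>y. ennreal (exp (- lam * d x y) / blahut_sigma d lam Q x))"

primrec blahut_out ::
  "'a measure \<Rightarrow> ('a \<Rightarrow> 'b \<Rightarrow> real) \<Rightarrow> real \<Rightarrow> 'b measure \<Rightarrow> nat \<Rightarrow> 'b measure" where
  "blahut_out P d lam Q0 0 = Q0"
| "blahut_out P d lam Q0 (Suc k) = bind P (blahut_kernel d lam (blahut_out P d lam Q0 k))"

definition blahut_F ::
  "'a measure \<Rightarrow> 'b measure \<Rightarrow> ('a \<Rightarrow> 'b \<Rightarrow> real) \<Rightarrow> real \<Rightarrow> 'b measure \<Rightarrow> nat \<Rightarrow> ereal" where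
  "blahut_F P MY d lam Q0 k = (INF K \<in> P \<rightarrow>\<^sub>M prob_algebra MY.
       cond_rel_entropy P K (blahut_out P d lam Q0 (k - 1)) + ereal lam * exp_distortion P K d)"

end

theory Submission
  imports Defs
begin

text \<open>Let \<open>\<Phi>(Q) = E[- ln \<Sigma>\<^sub>Q(X)]\<close>. By the Gibbs variational principle the Blahut kernel
  \<open>G\<^sub>Q\<close> attains the infimum defining the next \<open>F\<close>, so \<open>F\<^sub>k\<^sub>+\<^sub>1 = \<Phi>(Q\<^sub>k)\<close>, and
  \<open>I(G\<^sub>Q) + \<lambda> E[d] \<le> \<Phi>(Q)\<close>, whence \<open>F \<le> \<Phi>(Q\<^sub>k)\<close>. The key estimate is the three-point
  inequality \<open>\<Phi>(Q) + D(P\<^sub>K \<parallel> Q') \<le> I(K) + \<lambda> E\<^sub>K[d] + D(P\<^sub>K \<parallel> Q)\<close>, valid for every kernel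
  \<open>K\<close>, where \<open>Q'\<close> is the output law of \<open>G\<^sub>Q\<close>.
  Applied at \<open>Q\<^sub>k\<^sub>+\<^sub>1\<close> with \<open>K = G\<^sub>Q\<^sub>k\<close>, whose output law is \<open>Q\<^sub>k\<^sub>+\<^sub>1\<close>, it gives
  \<open>\<Phi>(Q\<^sub>k\<^sub>+\<^sub>1) \<le> \<Phi>(Q\<^sub>k)\<close>; at \<open>Q\<^sub>k\<close> with the optimal kernel it reads
  \<open>\<Phi>(Q\<^sub>k) + D\<^sub>k\<^sub>+\<^sub>1 \<le> F + D\<^sub>k\<close> with \<open>D\<^sub>k = D(P\<^sub>Y\<^sub>* \<parallel> Q\<^sub>k)\<close>, and telescoping gives
  \<open>k (\<Phi>(Q\<^sub>k\<^sub>-\<^sub>1) - F) \<le> D\<^sub>0\<close>.\<close>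

lemma ennreal_add_ennreal: "ennreal a + ennreal b = ennreal (max a 0 + max b 0)"
  by (subst ennreal_plus) (auto simp: ennreal_max_0)

lemma minus_ln_le: "0 < (t::real) \<Longrightarrow> - ln t \<le> 1 / t - 1"
  using ln_le_minus_one[of "1 / t"] by (simp add: ln_div)

text \<open>Since \<open>ennreal\<close> maps negative reals to 0, these are the positive and negative parts
  of the logarithm, which \<open>rel_entropy\<close> integrates separately. The negative part integrates
  to at most 1, so all subtractions of such integrals below are of finite quantities.\<close>
definition ln_pos :: "ennreal \<Rightarrow> ennreal" where
  "ln_pos v = ennreal (ln (enn2real v))"

definition ln_neg :: "ennreal \<Rightarrow> ennreal" where
  "ln_neg v = ennreal (- ln (enn2real v))"

lemma measurable_ln_pos [measurable]:
  "f \<in> borel_measurable M \<Longrightarrow> (\<lambda>x. ln_pos (f x)) \<in> borel_measurable M"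
  unfolding ln_pos_def by measurable

lemma measurable_ln_neg [measurable]:
  "f \<in> borel_measurable M \<Longrightarrow> (\<lambda>x. ln_neg (f x)) \<in> borel_measurable M"
  unfolding ln_neg_def by measurable

lemma rel_entropy_density:
  assumes "sigma_finite_measure M" and f: "f \<in> borel_measurable M"
  shows "rel_entropy (density M f) M =
     enn2ereal (\<integral>\<^sup>+ y. ln_pos (f y) \<partial>density M f) - enn2ereal (\<integral>\<^sup>+ y. ln_neg (f y) \<partial>density M f)"
proof -
  interpret M: sigma_finite_measure M by fact
  have "AE y in M. f y = RN_deriv M (density M f) y"
    by (rule M.RN_deriv_unique[OF f refl])
  then have "AE y in density M f. f y = RN_deriv M (density M f) y"
    using f by (subst AE_density) (auto elim: AE_mp)
  then show ?thesis
    unfolding rel_entropy_def ln_pos_def ln_neg_def using absolutely_continuousI_density[OF f]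
    by (simp, intro arg_cong2[where f="(-)"] arg_cong[where f=enn2ereal] nn_integral_cong_AE)
       (auto elim: AE_mp)
qed

lemma nn_integral_ln_neg_density_le_1:
  assumes "prob_space M" and f: "f \<in> borel_measurable M"
  shows "(\<integral>\<^sup>+ y. ln_neg (f y) \<partial>density M f) \<le> 1"
proof -
  interpret M: prob_space M by fact
  have "f y * ln_neg (f y) \<le> 1" for y
  proof (cases "f y")
    case (real t)
    have "t * max (- ln t) 0 \<le> 1"
    proof (cases "t = 0")
      case False
      then have "t * (- ln t) \<le> t * (1 / t - 1)"
        using minus_ln_le[of t] real by (intro mult_left_mono) auto
      also have "\<dots> = 1 - t" using False by (simp add: field_simps)
      finally show ?thesis using real by (auto simp: max_def)
    qed simp
    moreover have "f y * ln_neg (f y) = ennreal (t * max (- ln t) 0)"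
      unfolding ln_neg_def using real by (subst ennreal_max_0[symmetric]) (simp add: ennreal_mult)
    ultimately show ?thesis by (simp add: ennreal_le_1)
  qed (simp add: ln_neg_def)
  then have "(\<integral>\<^sup>+ y. f y * ln_neg (f y) \<partial>M) \<le> (\<integral>\<^sup>+ y. 1 \<partial>M)"
    by (intro nn_integral_mono)
  then show ?thesis
    using f M.emeasure_space_1 by (simp add: nn_integral_density)
qed

lemma AE_density_enn2real_pos:
  assumes f: "f \<in> borel_measurable M" and "prob_space (density M f)"
  shows "AE y in density M f. 0 < enn2real (f y)"
proof -
  interpret N: prob_space "density M f" by fact
  have "(\<integral>\<^sup>+ y. f y \<partial>M) = 1"
    using N.emeasure_space_1 f by (simp add: emeasure_density)
  then have "AE y in M. f y \<noteq> \<infinity>"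
    using nn_integral_PInf_AE[OF f] by simp
  then show ?thesis
    using f by (subst AE_density) (auto elim!: AE_mp simp: enn2real_positive_iff less_top)
qed

text \<open>Integrated form of \<open>ln u \<le> u - 1\<close>: the term \<open>\<phi> / f\<close> integrates against
  \<open>density M f\<close> to at most \<open>\<integral>\<phi> dM \<le> 1\<close>.\<close>
lemma gibbs_nn_integral_le:
  assumes f: "f \<in> borel_measurable M" and N: "prob_space (density M f)"
    and \<phi>: "\<phi> \<in> borel_measurable M" "\<And>y. 0 \<le> \<phi> y" "(\<integral>\<^sup>+ y. ennreal (\<phi> y) \<partial>M) \<le> 1"
    and a: "a \<in> borel_measurable M" and b: "b \<in> borel_measurable M"
    and ae: "AE y in density M f. b y + 1 \<le> a y + ennreal (\<phi> y / enn2real (f y))"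
  shows "(\<integral>\<^sup>+ y. b y \<partial>density M f) \<le> (\<integral>\<^sup>+ y. a y \<partial>density M f)"
proof -
  interpret N: prob_space "density M f" by (rule N)
  have "f y * ennreal (\<phi> y / enn2real (f y)) \<le> ennreal (\<phi> y)" for y
    using \<phi>(2)[of y] by (cases "f y"; cases "f y = 0") (auto simp: ennreal_mult[symmetric])
  then have "(\<integral>\<^sup>+ y. ennreal (\<phi> y / enn2real (f y)) \<partial>density M f) \<le> (\<integral>\<^sup>+ y. ennreal (\<phi> y) \<partial>M)"
    using f \<phi>(1) by (simp add: nn_integral_density nn_integral_mono)
  then have ratio: "(\<integral>\<^sup>+ y. ennreal (\<phi> y / enn2real (f y)) \<partial>density M f) \<le> 1"
    using \<phi>(3) by simp
  have "(\<integral>\<^sup>+ y. b y \<partial>density M f) + 1 = (\<integral>\<^sup>+ y. b y + 1 \<partial>density M f)"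
    using b N.emeasure_space_1 by (subst nn_integral_add) auto
  also have "\<dots> \<le> (\<integral>\<^sup>+ y. a y + ennreal (\<phi> y / enn2real (f y)) \<partial>density M f)"
    by (rule nn_integral_mono_AE[OF ae])
  also have "\<dots> = (\<integral>\<^sup>+ y. a y \<partial>density M f) + (\<integral>\<^sup>+ y. ennreal (\<phi> y / enn2real (f y)) \<partial>density M f)"
    using a f \<phi> by (subst nn_integral_add) auto
  also have "\<dots> \<le> (\<integral>\<^sup>+ y. a y \<partial>density M f) + 1"
    using ratio by (rule add_left_mono)
  finally show ?thesis
    using ennreal_add_left_cancel_le[of 1] by (simp add: add.commute)
qed

lemma nn_integral_ln_neg_le_ln_pos:
  assumes "prob_space M" and f: "f \<in> borel_measurable M" and N: "prob_space (density M f)"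
  shows "(\<integral>\<^sup>+ y. ln_neg (f y) \<partial>density M f) \<le> (\<integral>\<^sup>+ y. ln_pos (f y) \<partial>density M f)"
proof (rule gibbs_nn_integral_le[OF f N, where \<phi>="\<lambda>_. 1"])
  show "(\<integral>\<^sup>+ y. ennreal 1 \<partial>M) \<le> 1"
    using prob_space.emeasure_space_1[OF assms(1)] by simp
  show "AE y in density M f. ln_neg (f y) + 1 \<le> ln_pos (f y) + ennreal (1 / enn2real (f y))"
    using AE_density_enn2real_pos[OF f N]
  proof (rule AE_mp, intro AE_I2 impI)
    fix y assume t: "0 < enn2real (f y)"
    then have "max (- ln (enn2real (f y))) 0 + max 1 0
      \<le> max (ln (enn2real (f y))) 0 + max (1 / enn2real (f y)) 0"
      using minus_ln_le[OF t] by (auto simp: max_def)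
    then show "ln_neg (f y) + 1 \<le> ln_pos (f y) + ennreal (1 / enn2real (f y))"
      unfolding ln_pos_def ln_neg_def ennreal_1[symmetric] ennreal_add_ennreal
      by (simp add: ennreal_leI del: ennreal_plus ennreal_1)
  qed
qed (use f in auto)

lemma rel_entropy_nonneg:
  assumes M: "prob_space M" and N: "prob_space N" and sets: "sets N = sets M"
  shows "0 \<le> rel_entropy N M"
proof (cases "absolutely_continuous M N")
  case True
  interpret M: prob_space M by (rule M)
  define f where "f = RN_deriv M N"
  have f: "f \<in> borel_measurable M" unfolding f_def by simp
  have N_eq: "N = density M f"
    unfolding f_def using M.density_RN_deriv[OF True sets] by simp
  show ?thesis
    unfolding N_eq rel_entropy_density[OF M.sigma_finite_measure_axioms f]
    using nn_integral_ln_neg_le_ln_pos[OF M f] N N_eq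
    by (simp add: less_eq_ennreal.rep_eq ereal_diff_positive)
qed (simp add: rel_entropy_def)

lemma rel_entropy_self:
  assumes "prob_space M"
  shows "rel_entropy M M = 0"
proof -
  interpret M: prob_space M by fact
  have "rel_entropy (density M (\<lambda>_. 1)) M = 0"
    by (subst rel_entropy_density[OF M.sigma_finite_measure_axioms]) (auto simp: ln_pos_def ln_neg_def)
  then show ?thesis by (simp add: density_1)
qed

lemma ennreal_le_minus_add:
  fixes A B c e :: ennreal
  shows "B \<noteq> \<infinity> \<Longrightarrow> B + c \<le> A + e \<Longrightarrow> c \<le> (A - B) + e"
  apply (cases A; cases B; cases c; cases e)
  apply (auto simp: ennreal_minus ennreal_plus[symmetric] simp del: ennreal_plus)
  subgoal for r r' s s'
    unfolding ennreal_add_ennreal by (rule ennreal_leI) (auto simp: max_def)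
  subgoal by (simp add: top_unique)
  done

lemma ennreal_minus_add_eq:
  fixes A B c e :: ennreal
  shows "B \<noteq> \<infinity> \<Longrightarrow> B \<le> A \<Longrightarrow> A + e = B + c \<Longrightarrow> (A - B) + e = c"
  by (cases A; cases B; cases c; cases e) (auto simp: ennreal_minus ennreal_plus[symmetric] simp del: ennreal_plus)

lemma enn2ereal_add_mult:
  "0 \<le> r \<Longrightarrow> enn2ereal a + ereal r * enn2ereal b = enn2ereal (a + ennreal r * b)"
  by (simp add: plus_ennreal.rep_eq times_ennreal.rep_eq enn2ereal_ennreal)

lemma enn2ereal_eq_ereal: "x \<noteq> \<infinity> \<Longrightarrow> enn2ereal x = ereal (enn2real x)"
  by (simp add: enn2ereal_ennreal[symmetric] less_top)

lemma enn2ereal_diff_le_diff_add_diff: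
  fixes x a b a1 b1 y a2 b2 :: ennreal
  assumes fin: "b \<noteq> \<infinity>" "b1 \<noteq> \<infinity>" "b2 \<noteq> \<infinity>"
    and le: "x + a + b1 + b2 \<le> a1 + y + a2 + b"
  shows "enn2ereal x + (enn2ereal a - enn2ereal b)
    \<le> (enn2ereal a1 - enn2ereal b1) + enn2ereal y + (enn2ereal a2 - enn2ereal b2)"
proof (cases "a1 = \<infinity> \<or> y = \<infinity> \<or> a2 = \<infinity>")
  case True
  then have top: "(enn2ereal a1 - enn2ereal b1) + enn2ereal y + (enn2ereal a2 - enn2ereal b2) = \<infinity>"
    using enn2ereal_nonneg[of a1] enn2ereal_nonneg[of y] enn2ereal_nonneg[of a2]
    unfolding enn2ereal_eq_ereal[OF fin(2)] enn2ereal_eq_ereal[OF fin(3)]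
    by (cases "enn2ereal a1"; cases "enn2ereal y"; cases "enn2ereal a2") auto
  show ?thesis unfolding top by simp
next
  case False
  then have fin': "a1 \<noteq> \<infinity>" "y \<noteq> \<infinity>" "a2 \<noteq> \<infinity>" by auto
  then have "x + a + b1 + b2 \<noteq> \<infinity>"
    using le fin by (auto simp: top_unique ennreal_add_eq_top)
  then have fin'': "x \<noteq> \<infinity>" "a \<noteq> \<infinity>" by (auto simp: ennreal_add_eq_top)
  have "enn2ereal x + enn2ereal a + enn2ereal b1 + enn2ereal b2
    \<le> enn2ereal a1 + enn2ereal y + enn2ereal a2 + enn2ereal b"
    using le by (simp add: less_eq_ennreal.rep_eq plus_ennreal.rep_eq)
  then show ?thesis
    using fin fin' fin'' by (simp add: enn2ereal_eq_ereal)
qed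

lemma enn2ereal_diff_add_le:
  fixes a b y p n x :: ennreal
  assumes fin: "b \<noteq> \<infinity>" "n \<noteq> \<infinity>" and le: "n \<le> p"
    and eq: "a + y + p = b + x + n"
  shows "(enn2ereal a - enn2ereal b) + enn2ereal y \<le> enn2ereal x"
proof (cases "x = \<infinity>")
  case False
  then have "a + y + p \<noteq> \<infinity>"
    using eq fin by (simp add: ennreal_add_eq_top)
  then have fin': "a \<noteq> \<infinity>" "y \<noteq> \<infinity>" "p \<noteq> \<infinity>" by (auto simp: ennreal_add_eq_top)
  have "enn2real (a + y + p) = enn2real (b + x + n)" using eq by simp
  then have "enn2real a + enn2real y + enn2real p = enn2real b + enn2real x + enn2real n"
    using fin fin' False by (simp add: enn2real_plus less_top ennreal_add_eq_top)
  moreover have "enn2real n \<le> enn2real p"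
    using le fin' by (simp add: enn2real_mono less_top)
  ultimately show ?thesis
    using fin fin' False by (simp add: enn2ereal_eq_ereal)
qed simp

lemma nn_integral_le_add_of_pointwise:
  assumes f: "f \<in> borel_measurable M" and g: "g \<in> borel_measurable M"
    and le: "\<And>x. x \<in> space M \<Longrightarrow> f x \<le> r x + g x"
    and fin: "\<And>x. x \<in> space M \<Longrightarrow> f x \<noteq> \<infinity>"
  shows "(\<integral>\<^sup>+ x. f x \<partial>M) \<le> (\<integral>\<^sup>+ x. r x \<partial>M) + (\<integral>\<^sup>+ x. g x \<partial>M)"
proof -
  have "(\<integral>\<^sup>+ x. f x \<partial>M) \<le> (\<integral>\<^sup>+ x. (f x - g x) + g x \<partial>M)"
    by (intro nn_integral_mono) (metis add.commute ennreal_minus_le_iff le_iff_add linear order_refl)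
  also have "\<dots> = (\<integral>\<^sup>+ x. f x - g x \<partial>M) + (\<integral>\<^sup>+ x. g x \<partial>M)"
    using f g by (subst nn_integral_add) auto
  also have "\<dots> \<le> (\<integral>\<^sup>+ x. r x \<partial>M) + (\<integral>\<^sup>+ x. g x \<partial>M)"
    using le fin by (intro add_right_mono nn_integral_mono) (simp add: ennreal_minus_le_iff add.commute)
  finally show ?thesis .
qed

lemma nn_integral_eq_add_of_pointwise:
  assumes f: "f \<in> borel_measurable M" and g: "g \<in> borel_measurable M"
    and eq: "\<And>x. x \<in> space M \<Longrightarrow> r x + g x = f x" and fin: "\<And>x. x \<in> space M \<Longrightarrow> g x \<noteq> \<infinity>"
  shows "(\<integral>\<^sup>+ x. r x \<partial>M) + (\<integral>\<^sup>+ x. g x \<partial>M) = (\<integral>\<^sup>+ x. f x \<partial>M)"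
proof -
  have r: "r x = f x - g x" if "x \<in> space M" for x
    using ennreal_add_diff_cancel_right[OF fin[OF that, unfolded infinity_ennreal_def], of "r x"] eq[OF that]
    by simp
  have "(\<integral>\<^sup>+ x. r x \<partial>M) + (\<integral>\<^sup>+ x. g x \<partial>M) = (\<integral>\<^sup>+ x. (f x - g x) + g x \<partial>M)"
    using f g by (simp add: r nn_integral_add cong: nn_integral_cong)
  also have "\<dots> = (\<integral>\<^sup>+ x. f x \<partial>M)"
    using eq by (intro nn_integral_cong diff_add_cancel_ennreal) (metis le_iff_add add.commute)
  finally show ?thesis .
qed

lemma telescoping_rate:
  fixes \<phi> \<delta> :: "nat \<Rightarrow> real" and F :: real
  assumes step: "\<And>j. \<phi> j + \<delta> (Suc j) \<le> F + \<delta> j"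
    and lower: "\<And>j. F \<le> \<phi> j" and mono: "\<And>j. \<phi> (Suc j) \<le> \<phi> j" and nonneg: "\<And>j. 0 \<le> \<delta> j"
  shows "\<And>k. k \<ge> 1 \<Longrightarrow> \<phi> (k - 1) \<le> F + \<delta> 0 / real k" and "\<phi> \<longlonglongrightarrow> F"
proof -
  have sum: "(\<Sum>j<k. \<phi> j - F) \<le> \<delta> 0 - \<delta> k" for k
  proof (induction k)
    case (Suc k)
    then show ?case using step[of k] by simp
  qed simp
  have dec: "decseq \<phi>" by (rule decseq_SucI) (rule mono)
  show bound: "\<phi> (k - 1) \<le> F + \<delta> 0 / real k" if k: "k \<ge> 1" for k
  proof -
    have "real k * (\<phi> (k - 1) - F) = (\<Sum>j<k. \<phi> (k - 1) - F)" by simp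
    also have "\<dots> \<le> (\<Sum>j<k. \<phi> j - F)"
      by (intro sum_mono) (use decseqD[OF dec] in auto)
    also have "\<dots> \<le> \<delta> 0" using sum[of k] nonneg[of k] by simp
    finally have "\<phi> (k - 1) - F \<le> \<delta> 0 / real k"
      using k by (simp add: pos_le_divide_eq mult.commute)
    then show ?thesis by simp
  qed
  have "(\<lambda>k. F + \<delta> 0 * inverse (real (Suc k))) \<longlonglongrightarrow> F + \<delta> 0 * 0"
    by (intro tendsto_intros LIMSEQ_inverse_real_of_nat)
  then have lim: "(\<lambda>k. F + \<delta> 0 / real (Suc k)) \<longlonglongrightarrow> F"
    by (simp add: divide_inverse)
  show "\<phi> \<longlonglongrightarrow> F"
  proof (rule tendsto_sandwich[OF _ _ tendsto_const lim])
    show "\<forall>\<^sub>F k in sequentially. F \<le> \<phi> k" using lower by simp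
    show "\<forall>\<^sub>F k in sequentially. \<phi> k \<le> F + \<delta> 0 / real (Suc k)"
      using bound[of "Suc k" for k] by simp
  qed
qed

lemma ereal_telescoping_rate:
  fixes \<phi> D :: "nat \<Rightarrow> ereal" and F :: ereal
  assumes step: "\<And>j. \<phi> j + D (Suc j) \<le> F + D j"
    and lower: "\<And>j. F \<le> \<phi> j" and mono: "\<And>j. \<phi> (Suc j) \<le> \<phi> j"
    and \<phi>_nonneg: "\<And>j. 0 \<le> \<phi> j" and D_nonneg: "\<And>j. 0 \<le> D j" and D0: "D 0 < \<infinity>"
  shows "\<And>k. k \<ge> 1 \<Longrightarrow> \<phi> (k - 1) \<le> F + D 0 / ereal (real k)" and "\<phi> \<longlonglongrightarrow> F"
proof -
  obtain \<delta>0 where \<delta>0: "D 0 = ereal \<delta>0"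
    using D0 D_nonneg[of 0] by (cases "D 0") auto
  have "\<phi> \<longlonglongrightarrow> F \<and> (\<forall>k\<ge>1. \<phi> (k - 1) \<le> F + D 0 / ereal (real k))"
  proof (cases "F = \<infinity>")
    case True
    then have "\<phi> = (\<lambda>_. \<infinity>)" using lower by (simp add: fun_eq_iff)
    then show ?thesis using True \<delta>0 by simp
  next
    case False
    have "F \<noteq> - \<infinity>"
    proof
      assume "F = - \<infinity>"
      then have "\<phi> 0 + D 1 \<le> - \<infinity>" using step[of 0] \<delta>0 by simp
      then show False using \<phi>_nonneg[of 0] D_nonneg[of 1] by auto
    qed
    then obtain f where f: "F = ereal f" using False by (cases F) auto
    have finite_step: "\<phi> j \<noteq> \<infinity> \<and> D (Suc j) \<noteq> \<infinity>" if "D j \<noteq> \<infinity>" for j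
    proof -
      have "F + D j \<noteq> \<infinity>" using that f D_nonneg[of j] by (cases "D j") auto
      then have "\<phi> j + D (Suc j) \<noteq> \<infinity>" using step[of j] by (auto simp: top_unique)
      then show ?thesis using \<phi>_nonneg[of j] D_nonneg[of "Suc j"] by auto
    qed
    have D_fin: "D j \<noteq> \<infinity>" for j
      by (induction j) (use D0 finite_step in auto)
    define \<phi>' where "\<phi>' j = real_of_ereal (\<phi> j)" for j
    define \<delta> where "\<delta> j = real_of_ereal (D j)" for j
    have \<phi>': "\<phi> j = ereal (\<phi>' j)" for j
      using finite_step[OF D_fin[of j]] \<phi>_nonneg[of j] unfolding \<phi>'_def by (cases "\<phi> j") auto
    have \<delta>: "D j = ereal (\<delta> j)" for j
      using D_fin[of j] D_nonneg[of j] unfolding \<delta>_def by (cases "D j") auto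
    have "\<phi>' j + \<delta> (Suc j) \<le> f + \<delta> j" "f \<le> \<phi>' j" "\<phi>' (Suc j) \<le> \<phi>' j" "0 \<le> \<delta> j" for j
      using step[of j] lower[of j] mono[of j] D_nonneg[of j] unfolding \<phi>' \<delta> f by simp_all
    note lim = telescoping_rate(2)[of \<phi>' \<delta> f, OF this] and bound = telescoping_rate(1)[of \<phi>' \<delta> f, OF this]
    have "\<phi> (k - 1) \<le> F + D 0 / ereal (real k)" if "k \<ge> 1" for k
      using bound[OF that] that unfolding \<phi>' \<delta> f by simp
    moreover have "\<phi> \<longlonglongrightarrow> F"
      unfolding \<phi>' f by (rule tendsto_ereal[OF lim])
    ultimately show ?thesis by simp
  qed
  then show "\<phi> \<longlonglongrightarrow> F" "\<And>k. k \<ge> 1 \<Longrightarrow> \<phi> (k - 1) \<le> F + D 0 / ereal (real k)"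
    by simp_all
qed

lemma prob_algebra_prob_space: "Q \<in> space (prob_algebra M) \<Longrightarrow> prob_space Q"
  by (simp add: space_prob_algebra)

lemma prob_algebra_sets: "Q \<in> space (prob_algebra M) \<Longrightarrow> sets Q = sets M"
  by (simp add: space_prob_algebra)

lemma measurable_pair_kernel:
  assumes K: "K \<in> P \<rightarrow>\<^sub>M prob_algebra MY"
  shows "(\<lambda>x. distr (K x) (P \<Otimes>\<^sub>M MY) (\<lambda>y. (x, y))) \<in> P \<rightarrow>\<^sub>M prob_algebra (P \<Otimes>\<^sub>M MY)"
  by (rule measurable_distr_prob_space2[OF K]) simp

lemma joint_law_in_prob_algebra:
  assumes "prob_space P" and K: "K \<in> P \<rightarrow>\<^sub>M prob_algebra MY"
  shows "joint_law P MY K \<in> space (prob_algebra (P \<Otimes>\<^sub>M MY))"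
proof -
  have P: "P \<in> space (prob_algebra P)" using assms(1) by (simp add: space_prob_algebra)
  show ?thesis
    unfolding joint_law_def
    using prob_space_bind'[OF P measurable_pair_kernel[OF K]] sets_bind'[OF P measurable_pair_kernel[OF K]]
    by (simp add: space_prob_algebra)
qed

lemma output_law_in_prob_algebra:
  assumes "prob_space P" and K: "K \<in> P \<rightarrow>\<^sub>M prob_algebra MY"
  shows "output_law P K \<in> space (prob_algebra MY)"
proof -
  have P: "P \<in> space (prob_algebra P)" using assms(1) by (simp add: space_prob_algebra)
  show ?thesis
    unfolding output_law_def using prob_space_bind'[OF P K] sets_bind'[OF P K]
    by (simp add: space_prob_algebra)
qed

lemma nn_integral_joint_law:
  assumes K: "K \<in> P \<rightarrow>\<^sub>M prob_algebra MY" and h: "h \<in> borel_measurable (P \<Otimes>\<^sub>M MY)"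
  shows "(\<integral>\<^sup>+ z. h z \<partial>joint_law P MY K) = (\<integral>\<^sup>+ x. \<integral>\<^sup>+ y. h (x, y) \<partial>K x \<partial>P)"
  unfolding joint_law_def
proof (subst nn_integral_bind[OF h measurable_prob_algebraD[OF measurable_pair_kernel[OF K]]],
    rule nn_integral_cong)
  fix x assume x: "x \<in> space P"
  have sK: "sets (K x) = sets MY"
    using measurable_space[OF K x] by (simp add: space_prob_algebra)
  have "(\<lambda>y. (x, y)) \<in> K x \<rightarrow>\<^sub>M P \<Otimes>\<^sub>M MY"
    using measurable_Pair1'[OF x, of MY] by (simp add: measurable_cong_sets[OF sK refl])
  then show "(\<integral>\<^sup>+ z. h z \<partial>distr (K x) (P \<Otimes>\<^sub>M MY) (\<lambda>y. (x, y))) = (\<integral>\<^sup>+ y. h (x, y) \<partial>K x)"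
    by (rule nn_integral_distr) (use h in simp)
qed

lemma nn_integral_joint_law_fst:
  assumes K: "K \<in> P \<rightarrow>\<^sub>M prob_algebra MY" and f: "f \<in> borel_measurable P"
  shows "(\<integral>\<^sup>+ z. f (fst z) \<partial>joint_law P MY K) = (\<integral>\<^sup>+ x. f x \<partial>P)"
proof -
  have "(\<integral>\<^sup>+ z. f (fst z) \<partial>joint_law P MY K) = (\<integral>\<^sup>+ x. \<integral>\<^sup>+ y. f x \<partial>K x \<partial>P)"
    by (subst nn_integral_joint_law[OF K]) (use f in auto)
  also have "\<dots> = (\<integral>\<^sup>+ x. f x \<partial>P)"
    using measurable_space[OF K]
    by (intro nn_integral_cong) (simp add: space_prob_algebra prob_space.emeasure_space_1)
  finally show ?thesis .
qed

lemma nn_integral_joint_law_snd: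
  assumes K: "K \<in> P \<rightarrow>\<^sub>M prob_algebra MY" and f: "f \<in> borel_measurable MY"
  shows "(\<integral>\<^sup>+ z. f (snd z) \<partial>joint_law P MY K) = (\<integral>\<^sup>+ y. f y \<partial>output_law P K)"
proof -
  have "(\<integral>\<^sup>+ z. f (snd z) \<partial>joint_law P MY K) = (\<integral>\<^sup>+ x. \<integral>\<^sup>+ y. f y \<partial>K x \<partial>P)"
    by (subst nn_integral_joint_law[OF K]) (use f in auto)
  also have "\<dots> = (\<integral>\<^sup>+ y. f y \<partial>output_law P K)"
    unfolding output_law_def by (rule nn_integral_bind[OF f measurable_prob_algebraD[OF K], symmetric])
  finally show ?thesis .
qed

lemma distr_joint_law_snd:
  assumes P: "prob_space P" and K: "K \<in> P \<rightarrow>\<^sub>M prob_algebra MY"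
  shows "distr (joint_law P MY K) MY snd = output_law P K"
proof (rule measure_eqI)
  have sJ: "sets (joint_law P MY K) = sets (P \<Otimes>\<^sub>M MY)"
    using joint_law_in_prob_algebra[OF P K] by (simp add: space_prob_algebra)
  have sPK: "sets (output_law P K) = sets MY"
    using output_law_in_prob_algebra[OF P K] by (simp add: space_prob_algebra)
  show "sets (distr (joint_law P MY K) MY snd) = sets (output_law P K)" using sPK by simp
  fix A assume "A \<in> sets (distr (joint_law P MY K) MY snd)"
  then have A: "A \<in> sets MY" by simp
  have snd: "snd \<in> joint_law P MY K \<rightarrow>\<^sub>M MY" by (simp add: measurable_cong_sets[OF sJ refl])
  have "emeasure (distr (joint_law P MY K) MY snd) A
      = (\<integral>\<^sup>+ y. indicator A y \<partial>distr (joint_law P MY K) MY snd)"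
    using A by simp
  also have "\<dots> = (\<integral>\<^sup>+ z. indicator A (snd z) \<partial>joint_law P MY K)"
    by (rule nn_integral_distr[OF snd]) (use A in simp)
  also have "\<dots> = (\<integral>\<^sup>+ y. indicator A y \<partial>output_law P K)"
    by (rule nn_integral_joint_law_snd[OF K]) (use A in simp)
  also have "\<dots> = emeasure (output_law P K) A" using A sPK by simp
  finally show "emeasure (distr (joint_law P MY K) MY snd) A = emeasure (output_law P K) A" .
qed

lemma AE_joint_law_snd:
  assumes P: "prob_space P" and K: "K \<in> P \<rightarrow>\<^sub>M prob_algebra MY"
    and ae: "AE y in output_law P K. R y" and R: "{y \<in> space MY. R y} \<in> sets MY"
  shows "AE z in joint_law P MY K. R (snd z)"
proof -
  have sJ: "sets (joint_law P MY K) = sets (P \<Otimes>\<^sub>M MY)"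
    using joint_law_in_prob_algebra[OF P K] by (simp add: space_prob_algebra)
  have snd: "snd \<in> joint_law P MY K \<rightarrow>\<^sub>M MY" by (simp add: measurable_cong_sets[OF sJ refl])
  show ?thesis
    using ae unfolding distr_joint_law_snd[OF P K, symmetric] by (subst (asm) AE_distr_iff[OF snd R])
qed

lemma exp_distortion_joint_law:
  assumes K: "K \<in> P \<rightarrow>\<^sub>M prob_algebra MY" and d: "(\<lambda>(x, y). d x y) \<in> borel_measurable (P \<Otimes>\<^sub>M MY)"
  shows "exp_distortion P K d = enn2ereal (\<integral>\<^sup>+ z. ennreal (d (fst z) (snd z)) \<partial>joint_law P MY K)"
  unfolding exp_distortion_def using d by (subst nn_integral_joint_law[OF K]) (auto simp: case_prod_beta')

locale blahut =
  fixes P :: "'a measure" and MY :: "'b measure" and d :: "'a \<Rightarrow> 'b \<Rightarrow> real" and lam :: real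
  assumes P: "prob_space P"
    and d_measurable: "(\<lambda>(x, y). d x y) \<in> borel_measurable (P \<Otimes>\<^sub>M MY)"
    and d_nonneg: "\<And>x y. 0 \<le> d x y"
    and lam_pos: "lam > 0"
begin

lemma P_prob_algebra: "P \<in> space (prob_algebra P)"
  using P by (simp add: space_prob_algebra)

lemma measurable_d_pair:
  assumes "sets Q = sets MY"
  shows "(\<lambda>z. d (fst z) (snd z)) \<in> borel_measurable (P \<Otimes>\<^sub>M Q)"
  using d_measurable
  by (subst measurable_cong_sets[OF sets_pair_measure_cong[OF refl assms] refl]) (simp add: case_prod_beta')

lemma measurable_d:
  assumes "sets Q = sets MY" "x \<in> space P"
  shows "(\<lambda>y. d x y) \<in> borel_measurable Q"
  using measurable_Pair2[OF measurable_d_pair[OF assms(1)] assms(2)] by simp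

lemma lam_d_nonneg: "0 \<le> lam * d x y"
  using lam_pos d_nonneg by simp

lemma measurable_blahut_sigma:
  assumes Q: "Q \<in> space (prob_algebra MY)"
  shows "blahut_sigma d lam Q \<in> borel_measurable P"
proof -
  interpret Q: prob_space Q using Q by (rule prob_algebra_prob_space)
  note [measurable] = measurable_d_pair[OF prob_algebra_sets[OF Q]]
  show ?thesis unfolding blahut_sigma_def
    by (rule Q.borel_measurable_lebesgue_integral) (simp add: case_prod_beta')
qed

lemma ennreal_blahut_sigma:
  assumes Q: "Q \<in> space (prob_algebra MY)" and x: "x \<in> space P"
  shows "ennreal (blahut_sigma d lam Q x) = (\<integral>\<^sup>+ y. ennreal (exp (- lam * d x y)) \<partial>Q)"
proof -
  interpret Q: prob_space Q using Q by (rule prob_algebra_prob_space)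
  have "integrable Q (\<lambda>y. exp (- lam * d x y))"
    using measurable_d[OF prob_algebra_sets[OF Q] x] lam_d_nonneg
    by (intro Q.integrable_const_bound[where B=1]) auto
  then show ?thesis
    unfolding blahut_sigma_def by (intro nn_integral_eq_integral[symmetric]) auto
qed

lemma blahut_sigma_bounds:
  assumes Q: "Q \<in> space (prob_algebra MY)" and x: "x \<in> space P"
  shows "0 < blahut_sigma d lam Q x" "blahut_sigma d lam Q x \<le> 1"
proof -
  interpret Q: prob_space Q using Q by (rule prob_algebra_prob_space)
  have m: "(\<lambda>y. exp (- lam * d x y)) \<in> borel_measurable Q"
    using measurable_d[OF prob_algebra_sets[OF Q] x] by measurable
  have "(\<integral>\<^sup>+ y. ennreal (exp (- lam * d x y)) \<partial>Q) \<le> (\<integral>\<^sup>+ y. 1 \<partial>Q)"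
    using lam_d_nonneg by (intro nn_integral_mono) auto
  then have "ennreal (blahut_sigma d lam Q x) \<le> 1"
    using ennreal_blahut_sigma[OF Q x] Q.emeasure_space_1 by simp
  then show "blahut_sigma d lam Q x \<le> 1" by (simp add: ennreal_le_1)
  have "AE y in Q. ennreal (exp (- lam * d x y)) \<noteq> 0" by simp
  then have "(\<integral>\<^sup>+ y. ennreal (exp (- lam * d x y)) \<partial>Q) \<noteq> 0"
    using m Q.AE_False by (subst nn_integral_0_iff_AE) (auto elim: AE_mp)
  then show "0 < blahut_sigma d lam Q x"
    using ennreal_blahut_sigma[OF Q x] by (metis ennreal_eq_0_iff not_le)
qed

definition gibbs_density :: "'b measure \<Rightarrow> 'a \<Rightarrow> 'b \<Rightarrow> ennreal" where
  "gibbs_density Q x y = ennreal (exp (- lam * d x y) / blahut_sigma d lam Q x)"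

definition output_density :: "'b measure \<Rightarrow> 'b \<Rightarrow> ennreal" where
  "output_density Q y = (\<integral>\<^sup>+ x. gibbs_density Q x y \<partial>P)"

lemma blahut_kernel_eq_density: "blahut_kernel d lam Q x = density Q (gibbs_density Q x)"
  unfolding blahut_kernel_def gibbs_density_def by simp

lemma measurable_gibbs_density:
  assumes Q: "Q \<in> space (prob_algebra MY)"
  shows "(\<lambda>z. gibbs_density Q (fst z) (snd z)) \<in> borel_measurable (P \<Otimes>\<^sub>M Q)"
proof -
  note [measurable] = measurable_d_pair[OF prob_algebra_sets[OF Q]] measurable_blahut_sigma[OF Q]
  show ?thesis unfolding gibbs_density_def by measurable
qed

lemma measurable_gibbs_density_snd:
  assumes Q: "Q \<in> space (prob_algebra MY)" and x: "x \<in> space P"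
  shows "gibbs_density Q x \<in> borel_measurable Q"
  using measurable_Pair2[OF measurable_gibbs_density[OF Q] x] by simp

lemma measurable_gibbs_density_fst:
  assumes Q: "Q \<in> space (prob_algebra MY)" and y: "y \<in> space Q"
  shows "(\<lambda>x. gibbs_density Q x y) \<in> borel_measurable P"
  using measurable_Pair1[OF measurable_gibbs_density[OF Q] y] by simp

lemma nn_integral_gibbs_density:
  assumes Q: "Q \<in> space (prob_algebra MY)" and x: "x \<in> space P"
  shows "(\<integral>\<^sup>+ y. gibbs_density Q x y \<partial>Q) = 1"
proof -
  have s: "0 < blahut_sigma d lam Q x" using blahut_sigma_bounds[OF Q x] by simp
  have "(\<integral>\<^sup>+ y. gibbs_density Q x y \<partial>Q)
      = (\<integral>\<^sup>+ y. ennreal (exp (- lam * d x y)) * ennreal (1 / blahut_sigma d lam Q x) \<partial>Q)"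
    unfolding gibbs_density_def using s
    by (intro nn_integral_cong) (simp add: ennreal_mult[symmetric] divide_inverse)
  also have "\<dots> = ennreal (blahut_sigma d lam Q x) * ennreal (1 / blahut_sigma d lam Q x)"
    using measurable_d[OF prob_algebra_sets[OF Q] x]
    by (subst nn_integral_multc) (auto simp: ennreal_blahut_sigma[OF Q x])
  also have "\<dots> = 1" using s by (simp add: ennreal_mult[symmetric])
  finally show ?thesis .
qed

lemma blahut_kernel_in_prob_algebra:
  assumes Q: "Q \<in> space (prob_algebra MY)" and x: "x \<in> space P"
  shows "blahut_kernel d lam Q x \<in> space (prob_algebra MY)"
proof -
  have "prob_space (blahut_kernel d lam Q x)"
    unfolding blahut_kernel_eq_density
    by (rule prob_spaceI)
      (simp add: emeasure_density[OF measurable_gibbs_density_snd[OF Q x]] nn_integral_gibbs_density[OF Q x])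
  then show ?thesis
    using prob_algebra_sets[OF Q] by (simp add: space_prob_algebra blahut_kernel_eq_density)
qed

lemma measurable_blahut_kernel:
  assumes Q: "Q \<in> space (prob_algebra MY)"
  shows "blahut_kernel d lam Q \<in> P \<rightarrow>\<^sub>M prob_algebra MY"
proof (rule measurable_prob_algebraI)
  show "prob_space (blahut_kernel d lam Q x)" if "x \<in> space P" for x
    using blahut_kernel_in_prob_algebra[OF Q that] by (rule prob_algebra_prob_space)
  interpret Q: prob_space Q using Q by (rule prob_algebra_prob_space)
  have sQ: "sets Q = sets MY" using Q by (rule prob_algebra_sets)
  show "blahut_kernel d lam Q \<in> P \<rightarrow>\<^sub>M subprob_algebra MY"
  proof (rule measurable_subprob_algebra)
    fix x assume "x \<in> space P"
    then show "subprob_space (blahut_kernel d lam Q x)" "sets (blahut_kernel d lam Q x) = sets MY"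
      using blahut_kernel_in_prob_algebra[OF Q] prob_space_imp_subprob_space
      by (auto simp: space_prob_algebra)
  next
    fix A assume A: "A \<in> sets MY"
    note [measurable] = measurable_gibbs_density[OF Q]
    have [measurable]: "A \<in> sets Q" using A sQ by simp
    have "(\<lambda>x. \<integral>\<^sup>+ y. gibbs_density Q x y * indicator A y \<partial>Q) \<in> borel_measurable P"
      by (rule Q.borel_measurable_nn_integral) (simp add: case_prod_beta')
    then show "(\<lambda>x. emeasure (blahut_kernel d lam Q x) A) \<in> borel_measurable P"
      by (rule measurable_cong[THEN iffD1, rotated])
        (use A sQ in \<open>simp add: blahut_kernel_eq_density emeasure_density[OF measurable_gibbs_density_snd[OF Q]]\<close>)
  qed
qed

lemma measurable_output_density:
  assumes Q: "Q \<in> space (prob_algebra MY)"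
  shows "output_density Q \<in> borel_measurable Q"
proof -
  interpret P: prob_space P by (rule P)
  have "(\<lambda>z. (\<lambda>z. gibbs_density Q (fst z) (snd z)) (snd z, fst z)) \<in> borel_measurable (Q \<Otimes>\<^sub>M P)"
    using measurable_gibbs_density[OF Q] by measurable
  then have "(\<lambda>(y, x). gibbs_density Q x y) \<in> borel_measurable (Q \<Otimes>\<^sub>M P)"
    by (simp add: case_prod_beta')
  then show ?thesis unfolding output_density_def by (rule P.borel_measurable_nn_integral)
qed

end

context blahut
begin

lemma bind_blahut_kernel_eq_density:
  assumes Q: "Q \<in> space (prob_algebra MY)"
  shows "bind P (blahut_kernel d lam Q) = density Q (output_density Q)"
proof (rule measure_eqI)
  interpret Q: prob_space Q using Q by (rule prob_algebra_prob_space)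
  interpret P: prob_space P by (rule P)
  interpret PQ: pair_prob_space P Q ..
  have sQ: "sets Q = sets MY" using Q by (rule prob_algebra_sets)
  note sets_bind = sets_bind'[OF P_prob_algebra measurable_blahut_kernel[OF Q]]
  show "sets (bind P (blahut_kernel d lam Q)) = sets (density Q (output_density Q))"
    using sets_bind sQ by simp
  fix A assume "A \<in> sets (bind P (blahut_kernel d lam Q))"
  then have A: "A \<in> sets MY" using sets_bind by simp
  note [measurable] = measurable_gibbs_density[OF Q]
  have [measurable]: "A \<in> sets Q" using A sQ by simp
  have "emeasure (bind P (blahut_kernel d lam Q)) A
      = (\<integral>\<^sup>+ x. emeasure (blahut_kernel d lam Q x) A \<partial>P)"
    by (rule emeasure_bind_prob_algebra[OF P_prob_algebra measurable_blahut_kernel[OF Q] A])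
  also have "\<dots> = (\<integral>\<^sup>+ x. \<integral>\<^sup>+ y. gibbs_density Q x y * indicator A y \<partial>Q \<partial>P)"
    using A sQ
    by (intro nn_integral_cong)
      (simp add: blahut_kernel_eq_density emeasure_density[OF measurable_gibbs_density_snd[OF Q]])
  also have "\<dots> = (\<integral>\<^sup>+ y. \<integral>\<^sup>+ x. gibbs_density Q x y * indicator A y \<partial>P \<partial>Q)"
    by (rule PQ.Fubini'[symmetric]) (simp add: case_prod_beta')
  also have "\<dots> = (\<integral>\<^sup>+ y. output_density Q y * indicator A y \<partial>Q)"
    unfolding output_density_def
    by (intro nn_integral_cong nn_integral_multc measurable_gibbs_density_fst[OF Q])
  also have "\<dots> = emeasure (density Q (output_density Q)) A"
    using A sQ by (simp add: emeasure_density[OF measurable_output_density[OF Q]])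
  finally show "emeasure (bind P (blahut_kernel d lam Q)) A = emeasure (density Q (output_density Q)) A" .
qed

lemma bind_blahut_kernel_in_prob_algebra:
  assumes Q: "Q \<in> space (prob_algebra MY)"
  shows "bind P (blahut_kernel d lam Q) \<in> space (prob_algebra MY)"
  using output_law_in_prob_algebra[OF P measurable_blahut_kernel[OF Q]] by (simp add: output_law_def)

lemma output_density_pos:
  assumes Q: "Q \<in> space (prob_algebra MY)" and y: "y \<in> space Q"
  shows "0 < output_density Q y"
proof -
  interpret P: prob_space P by (rule P)
  have "AE x in P. gibbs_density Q x y \<noteq> 0"
  proof (rule AE_I2)
    fix x assume "x \<in> space P"
    then have "0 < exp (- lam * d x y) / blahut_sigma d lam Q x"
      using blahut_sigma_bounds(1)[OF Q] by simp
    then show "gibbs_density Q x y \<noteq> 0"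
      unfolding gibbs_density_def by (simp add: ennreal_eq_0_iff not_le)
  qed
  show ?thesis
  proof (rule ccontr)
    assume "\<not> 0 < output_density Q y"
    then have "(\<integral>\<^sup>+ x. gibbs_density Q x y \<partial>P) = 0"
      unfolding output_density_def by (simp add: zero_less_iff_neq_zero)
    then have "AE x in P. gibbs_density Q x y = 0"
      using nn_integral_0_iff_AE[OF measurable_gibbs_density_fst[OF Q y]] by simp
    with \<open>AE x in P. gibbs_density Q x y \<noteq> 0\<close> have "AE x in P. False"
      by eventually_elim simp
    then show False using P.AE_False by simp
  qed
qed

lemma output_density_finite_AE:
  assumes Q: "Q \<in> space (prob_algebra MY)"
  shows "AE y in Q. output_density Q y < \<infinity>"
proof -
  interpret Q': prob_space "density Q (output_density Q)"
    using bind_blahut_kernel_in_prob_algebra[OF Q]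
    by (simp add: bind_blahut_kernel_eq_density[OF Q] space_prob_algebra)
  have "(\<integral>\<^sup>+ y. output_density Q y \<partial>Q) = 1"
    using Q'.emeasure_space_1 measurable_output_density[OF Q] by (simp add: emeasure_density)
  then show ?thesis
    using nn_integral_PInf_AE[OF measurable_output_density[OF Q]] by (simp add: less_top)
qed

end

lemma ennreal_gibbs_ineq:
  fixes t S L :: real
  assumes t: "0 < t" and S: "0 < S" "S \<le> 1" and L: "0 \<le> L"
  shows "ennreal (- ln t) + ennreal (- ln S) + 1 \<le> ennreal (ln t) + ennreal L + ennreal (exp (- L) / S / t)"
proof -
  define u where "u = exp (- L) / S / t"
  have u: "0 < u" using t S by (simp add: u_def)
  have "ln u = - L - ln S - ln t"
    using t S by (simp add: u_def ln_div ln_mult)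
  then have "max (- ln t) 0 + max (- ln S) 0 + max 1 0 \<le> max (ln t) 0 + max L 0 + max u 0"
    using ln_le_minus_one[OF u] S L u by (auto simp: max_def)
  then show ?thesis
    unfolding u_def[symmetric] ennreal_1[symmetric] ennreal_add_ennreal
    by (simp add: ennreal_leI del: ennreal_plus ennreal_1)
qed

context blahut
begin

definition blahut_value :: "'b measure \<Rightarrow> ennreal" where
  "blahut_value Q = (\<integral>\<^sup>+ x. ennreal (- ln (blahut_sigma d lam Q x)) \<partial>P)"

lemma measurable_minus_ln_blahut_sigma:
  assumes Q: "Q \<in> space (prob_algebra MY)"
  shows "(\<lambda>x. ennreal (- ln (blahut_sigma d lam Q x))) \<in> borel_measurable P"
  using measurable_blahut_sigma[OF Q] by measurable

text \<open>The Gibbs variational inequality; \<open>rel_entropy_blahut_kernel\<close> is its equality case.\<close>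
lemma minus_ln_blahut_sigma_le:
  assumes Q: "Q \<in> space (prob_algebra MY)" and x: "x \<in> space P"
    and K: "K \<in> space (prob_algebra MY)"
  shows "ennreal (- ln (blahut_sigma d lam Q x))
     \<le> e2ennreal (rel_entropy K Q) + ennreal lam * (\<integral>\<^sup>+ y. ennreal (d x y) \<partial>K)"
proof (cases "absolutely_continuous Q K")
  case True
  interpret Q: prob_space Q using Q by (rule prob_algebra_prob_space)
  have sQ: "sets Q = sets MY" using Q by (rule prob_algebra_sets)
  define f where "f = RN_deriv Q K"
  have f[measurable]: "f \<in> borel_measurable Q" unfolding f_def by simp
  have K_eq: "K = density Q f"
    unfolding f_def using Q.density_RN_deriv[OF True] K sQ by (simp add: space_prob_algebra)
  have N: "prob_space (density Q f)" using K K_eq by (simp add: space_prob_algebra)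
  have [measurable]: "(\<lambda>y. d x y) \<in> borel_measurable Q" by (rule measurable_d[OF sQ x])
  define S where "S = blahut_sigma d lam Q x"
  have S: "0 < S" "S \<le> 1" using blahut_sigma_bounds[OF Q x] by (auto simp: S_def)
  define A where "A = (\<integral>\<^sup>+ y. ln_pos (f y) \<partial>density Q f)"
  define B where "B = (\<integral>\<^sup>+ y. ln_neg (f y) \<partial>density Q f)"
  define e where "e = (\<integral>\<^sup>+ y. ennreal (d x y) \<partial>density Q f)"
  have "(\<integral>\<^sup>+ y. ln_neg (f y) + ennreal (- ln S) \<partial>density Q f)
      \<le> (\<integral>\<^sup>+ y. ln_pos (f y) + ennreal (lam * d x y) \<partial>density Q f)"
  proof (rule gibbs_nn_integral_le[OF f N, where \<phi>="\<lambda>y. exp (- lam * d x y) / S"])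
    show "(\<integral>\<^sup>+ y. ennreal (exp (- lam * d x y) / S) \<partial>Q) \<le> 1"
      using nn_integral_gibbs_density[OF Q x] by (simp add: gibbs_density_def S_def)
    show "AE y in density Q f. ln_neg (f y) + ennreal (- ln S) + 1
        \<le> ln_pos (f y) + ennreal (lam * d x y) + ennreal (exp (- lam * d x y) / S / enn2real (f y))"
      using AE_density_enn2real_pos[OF f N]
      by eventually_elim (use ennreal_gibbs_ineq S lam_d_nonneg in \<open>simp add: ln_pos_def ln_neg_def\<close>)
  qed (use S in auto)
  moreover have "(\<integral>\<^sup>+ y. ln_neg (f y) + ennreal (- ln S) \<partial>density Q f) = B + ennreal (- ln S)"
    unfolding B_def using prob_space.emeasure_space_1[OF N] by (subst nn_integral_add) auto
  moreover have "(\<integral>\<^sup>+ y. ln_pos (f y) + ennreal (lam * d x y) \<partial>density Q f) = A + ennreal lam * e"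
    unfolding A_def e_def using lam_pos d_nonneg
    by (subst nn_integral_add) (auto simp: ennreal_mult nn_integral_cmult)
  moreover have "B \<le> 1"
    unfolding B_def by (rule nn_integral_ln_neg_density_le_1[OF Q.prob_space_axioms f])
  ultimately have "ennreal (- ln S) \<le> (A - B) + ennreal lam * e"
    by (intro ennreal_le_minus_add) (auto simp: top_unique)
  moreover have "rel_entropy K Q = enn2ereal A - enn2ereal B"
    unfolding K_eq A_def B_def by (rule rel_entropy_density[OF Q.sigma_finite_measure_axioms f])
  ultimately show ?thesis using K_eq by (simp add: S_def e_def)
qed (use K Q in \<open>simp add: rel_entropy_def space_prob_algebra\<close>)

lemma rel_entropy_blahut_kernel:
  assumes Q: "Q \<in> space (prob_algebra MY)" and x: "x \<in> space P"
  shows "e2ennreal (rel_entropy (blahut_kernel d lam Q x) Q)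
     + ennreal lam * (\<integral>\<^sup>+ y. ennreal (d x y) \<partial>blahut_kernel d lam Q x)
     = ennreal (- ln (blahut_sigma d lam Q x))"
proof -
  interpret Q: prob_space Q using Q by (rule prob_algebra_prob_space)
  have sQ: "sets Q = sets MY" using Q by (rule prob_algebra_sets)
  define f where "f = gibbs_density Q x"
  have f[measurable]: "f \<in> borel_measurable Q"
    unfolding f_def by (rule measurable_gibbs_density_snd[OF Q x])
  have K_eq: "blahut_kernel d lam Q x = density Q f" unfolding f_def blahut_kernel_eq_density ..
  have N: "prob_space (density Q f)"
    using blahut_kernel_in_prob_algebra[OF Q x] K_eq by (simp add: space_prob_algebra)
  have [measurable]: "(\<lambda>y. d x y) \<in> borel_measurable Q" by (rule measurable_d[OF sQ x])
  define S where "S = blahut_sigma d lam Q x"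
  have S: "0 < S" "S \<le> 1" using blahut_sigma_bounds[OF Q x] by (auto simp: S_def)
  define A where "A = (\<integral>\<^sup>+ y. ln_pos (f y) \<partial>density Q f)"
  define B where "B = (\<integral>\<^sup>+ y. ln_neg (f y) \<partial>density Q f)"
  define e where "e = (\<integral>\<^sup>+ y. ennreal (d x y) \<partial>density Q f)"
  have pointwise: "ln_pos (f y) + ennreal (lam * d x y) = ln_neg (f y) + ennreal (- ln S)" for y
  proof -
    have "ln (enn2real (f y)) = - lam * d x y - ln S"
      using S by (simp add: f_def gibbs_density_def S_def ln_div)
    then have "max (ln (enn2real (f y))) 0 + max (lam * d x y) 0
        = max (- ln (enn2real (f y))) 0 + max (- ln S) 0"
      using S lam_d_nonneg[of x y] by (simp add: max_def)
    then show ?thesis unfolding ln_pos_def ln_neg_def ennreal_add_ennreal by simp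
  qed
  have "A + ennreal lam * e = (\<integral>\<^sup>+ y. ln_pos (f y) + ennreal (lam * d x y) \<partial>density Q f)"
    unfolding A_def e_def using lam_pos d_nonneg
    by (subst nn_integral_add) (auto simp: ennreal_mult nn_integral_cmult)
  also have "\<dots> = B + ennreal (- ln S)"
    unfolding pointwise B_def using prob_space.emeasure_space_1[OF N] by (subst nn_integral_add) auto
  finally have "A + ennreal lam * e = B + ennreal (- ln S)" .
  moreover have "B \<le> A"
    unfolding A_def B_def by (rule nn_integral_ln_neg_le_ln_pos[OF Q.prob_space_axioms f N])
  moreover have "B \<le> 1"
    unfolding B_def by (rule nn_integral_ln_neg_density_le_1[OF Q.prob_space_axioms f])
  ultimately have "(A - B) + ennreal lam * e = ennreal (- ln S)"
    by (intro ennreal_minus_add_eq) (auto simp: top_unique)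
  moreover have "rel_entropy (density Q f) Q = enn2ereal A - enn2ereal B"
    unfolding A_def B_def by (rule rel_entropy_density[OF Q.sigma_finite_measure_axioms f])
  ultimately show ?thesis using K_eq by (simp add: S_def e_def)
qed

text \<open>The map \<open>x \<mapsto> e2ennreal (rel_entropy (K x) Q)\<close> is not known to be measurable,
  so it may only appear as the non-integrated summand \<open>r\<close> of
  \<open>nn_integral_le_add_of_pointwise\<close> and \<open>nn_integral_eq_add_of_pointwise\<close>.\<close>
lemma blahut_value_le:
  assumes Q: "Q \<in> space (prob_algebra MY)" and K: "K \<in> P \<rightarrow>\<^sub>M prob_algebra MY"
  shows "enn2ereal (blahut_value Q) \<le> cond_rel_entropy P K Q + ereal lam * exp_distortion P K d"
proof -
  define E where "E x = (\<integral>\<^sup>+ y. ennreal (d x y) \<partial>K x)" for x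
  have E: "E \<in> borel_measurable P"
    unfolding E_def using d_measurable
    by (intro nn_integral_measurable_subprob_algebra2[OF _ measurable_prob_algebraD[OF K]])
      (simp add: case_prod_beta')
  have "blahut_value Q \<le> (\<integral>\<^sup>+ x. e2ennreal (rel_entropy (K x) Q) \<partial>P) + (\<integral>\<^sup>+ x. ennreal lam * E x \<partial>P)"
    unfolding blahut_value_def
  proof (rule nn_integral_le_add_of_pointwise)
    show "(\<lambda>x. ennreal lam * E x) \<in> borel_measurable P" using E by measurable
    fix x assume x: "x \<in> space P"
    show "ennreal (- ln (blahut_sigma d lam Q x)) \<le> e2ennreal (rel_entropy (K x) Q) + ennreal lam * E x"
      unfolding E_def by (rule minus_ln_blahut_sigma_le[OF Q x measurable_space[OF K x]])
  qed (simp_all add: measurable_minus_ln_blahut_sigma[OF Q])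
  also have "\<dots> = (\<integral>\<^sup>+ x. e2ennreal (rel_entropy (K x) Q) \<partial>P) + ennreal lam * (\<integral>\<^sup>+ x. E x \<partial>P)"
    using E by (simp add: nn_integral_cmult)
  finally show ?thesis
    unfolding cond_rel_entropy_def exp_distortion_def E_def[symmetric]
      enn2ereal_add_mult[OF less_imp_le[OF lam_pos]] less_eq_ennreal.rep_eq[symmetric] .
qed

lemma blahut_kernel_attains_blahut_value:
  assumes Q: "Q \<in> space (prob_algebra MY)"
  shows "cond_rel_entropy P (blahut_kernel d lam Q) Q
      + ereal lam * exp_distortion P (blahut_kernel d lam Q) d = enn2ereal (blahut_value Q)"
proof -
  define E where "E x = (\<integral>\<^sup>+ y. ennreal (d x y) \<partial>blahut_kernel d lam Q x)" for x
  have E: "E \<in> borel_measurable P"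
    unfolding E_def using d_measurable
    by (intro nn_integral_measurable_subprob_algebra2
        [OF _ measurable_prob_algebraD[OF measurable_blahut_kernel[OF Q]]])
      (simp add: case_prod_beta')
  have "(\<integral>\<^sup>+ x. e2ennreal (rel_entropy (blahut_kernel d lam Q x) Q) \<partial>P) + (\<integral>\<^sup>+ x. ennreal lam * E x \<partial>P)
      = blahut_value Q"
    unfolding blahut_value_def
  proof (rule nn_integral_eq_add_of_pointwise)
    show "(\<lambda>x. ennreal lam * E x) \<in> borel_measurable P" using E by measurable
    fix x assume x: "x \<in> space P"
    show eq: "e2ennreal (rel_entropy (blahut_kernel d lam Q x) Q) + ennreal lam * E x
        = ennreal (- ln (blahut_sigma d lam Q x))"
      unfolding E_def by (rule rel_entropy_blahut_kernel[OF Q x])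
    show "ennreal lam * E x \<noteq> \<infinity>"
      using arg_cong[OF eq, of "\<lambda>v. v = \<infinity>"] by (simp add: ennreal_add_eq_top)
  qed (rule measurable_minus_ln_blahut_sigma[OF Q])
  then have "(\<integral>\<^sup>+ x. e2ennreal (rel_entropy (blahut_kernel d lam Q x) Q) \<partial>P) + ennreal lam * (\<integral>\<^sup>+ x. E x \<partial>P)
      = blahut_value Q"
    using E by (simp add: nn_integral_cmult)
  then show ?thesis
    unfolding cond_rel_entropy_def exp_distortion_def E_def[symmetric]
      enn2ereal_add_mult[OF less_imp_le[OF lam_pos]] by simp
qed

lemma INF_cond_rel_entropy_eq_blahut_value:
  assumes Q: "Q \<in> space (prob_algebra MY)"
  shows "(INF K \<in> P \<rightarrow>\<^sub>M prob_algebra MY. cond_rel_entropy P K Q + ereal lam * exp_distortion P K d)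
    = enn2ereal (blahut_value Q)"
proof (rule antisym)
  show "(INF K \<in> P \<rightarrow>\<^sub>M prob_algebra MY. cond_rel_entropy P K Q + ereal lam * exp_distortion P K d)
    \<le> enn2ereal (blahut_value Q)"
    by (rule INF_lower2[OF measurable_blahut_kernel[OF Q]])
      (simp add: blahut_kernel_attains_blahut_value[OF Q])
qed (rule INF_greatest, rule blahut_value_le[OF Q])

lemma blahut_out_in_prob_algebra:
  assumes "Q0 \<in> space (prob_algebra MY)"
  shows "blahut_out P d lam Q0 j \<in> space (prob_algebra MY)"
  by (induction j) (auto simp: assms bind_blahut_kernel_in_prob_algebra)

lemma blahut_F_Suc:
  assumes "Q0 \<in> space (prob_algebra MY)"
  shows "blahut_F P MY d lam Q0 (Suc j) = enn2ereal (blahut_value (blahut_out P d lam Q0 j))"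
  unfolding blahut_F_def
  using INF_cond_rel_entropy_eq_blahut_value[OF blahut_out_in_prob_algebra[OF assms]] by simp

end

lemma density_eq_density_divide:
  assumes W: "W \<in> borel_measurable Q" and h: "h \<in> borel_measurable Q"
    and W_pos: "\<And>y. y \<in> space Q \<Longrightarrow> 0 < W y" and W_fin: "AE y in Q. W y < \<infinity>"
  shows "density Q h = density (density Q W) (\<lambda>y. h y / W y)"
proof -
  have "density (density Q W) (\<lambda>y. h y / W y) = density Q (\<lambda>y. W y * (h y / W y))"
    using W h by (intro density_density_eq) auto
  also have "\<dots> = density Q h"
  proof (rule density_cong)
    show "AE y in Q. W y * (h y / W y) = h y"
      using W_fin AE_space
    proof eventually_elim
      case (elim y)
      then show ?case
        using W_pos[of y] by (metis ennreal_divide_times ennreal_divide_self infinity_ennreal_def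
          mult_1 order.strict_iff_not top.not_eq_extremum zero_less_iff_neq_zero)
    qed
  qed (use W h in auto)
  finally show ?thesis ..
qed

context blahut
begin

lemma joint_law_blahut_kernel:
  assumes Q: "Q \<in> space (prob_algebra MY)"
  shows "joint_law P MY (blahut_kernel d lam Q) = density (P \<Otimes>\<^sub>M Q) (\<lambda>z. gibbs_density Q (fst z) (snd z))"
proof (rule measure_eqI)
  interpret Q: prob_space Q using Q by (rule prob_algebra_prob_space)
  have sQ: "sets Q = sets MY" using Q by (rule prob_algebra_sets)
  note K = measurable_blahut_kernel[OF Q]
  have sJ: "sets (joint_law P MY (blahut_kernel d lam Q)) = sets (P \<Otimes>\<^sub>M MY)"
    using joint_law_in_prob_algebra[OF P K] by (simp add: space_prob_algebra)
  have sPQ: "sets (P \<Otimes>\<^sub>M Q) = sets (P \<Otimes>\<^sub>M MY)" by (rule sets_pair_measure_cong[OF refl sQ])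
  note g = measurable_gibbs_density[OF Q]
  show "sets (joint_law P MY (blahut_kernel d lam Q))
      = sets (density (P \<Otimes>\<^sub>M Q) (\<lambda>z. gibbs_density Q (fst z) (snd z)))"
    using sJ sPQ by simp
  fix A assume "A \<in> sets (joint_law P MY (blahut_kernel d lam Q))"
  then have A: "A \<in> sets (P \<Otimes>\<^sub>M MY)" and AQ: "A \<in> sets (P \<Otimes>\<^sub>M Q)" using sJ sPQ by auto
  have "emeasure (joint_law P MY (blahut_kernel d lam Q)) A
      = (\<integral>\<^sup>+ z. indicator A z \<partial>joint_law P MY (blahut_kernel d lam Q))"
    using A sJ by simp
  also have "\<dots> = (\<integral>\<^sup>+ x. \<integral>\<^sup>+ y. indicator A (x, y) \<partial>blahut_kernel d lam Q x \<partial>P)"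
    by (rule nn_integral_joint_law[OF K]) (use A in simp)
  also have "\<dots> = (\<integral>\<^sup>+ x. \<integral>\<^sup>+ y. gibbs_density Q x y * indicator A (x, y) \<partial>Q \<partial>P)"
  proof (rule nn_integral_cong)
    fix x assume x: "x \<in> space P"
    have "(\<lambda>y. indicator A (x, y)) \<in> borel_measurable Q"
      using measurable_Pair2[OF borel_measurable_indicator[OF AQ] x] by simp
    then show "(\<integral>\<^sup>+ y. indicator A (x, y) \<partial>blahut_kernel d lam Q x)
        = (\<integral>\<^sup>+ y. gibbs_density Q x y * indicator A (x, y) \<partial>Q)"
      unfolding blahut_kernel_eq_density
      by (rule nn_integral_density[OF measurable_gibbs_density_snd[OF Q x]])
  qed
  also have "\<dots> = (\<integral>\<^sup>+ z. gibbs_density Q (fst z) (snd z) * indicator A z \<partial>(P \<Otimes>\<^sub>M Q))"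
    using Q.nn_integral_fst[of "\<lambda>z. gibbs_density Q (fst z) (snd z) * indicator A z" P] g AQ by simp
  also have "\<dots> = emeasure (density (P \<Otimes>\<^sub>M Q) (\<lambda>z. gibbs_density Q (fst z) (snd z))) A"
    by (rule emeasure_density[OF g AQ, symmetric])
  finally show "emeasure (joint_law P MY (blahut_kernel d lam Q)) A
      = emeasure (density (P \<Otimes>\<^sub>M Q) (\<lambda>z. gibbs_density Q (fst z) (snd z))) A" .
qed

lemma joint_law_blahut_kernel_eq_density_output:
  assumes Q: "Q \<in> space (prob_algebra MY)"
  shows "joint_law P MY (blahut_kernel d lam Q)
    = density (P \<Otimes>\<^sub>M output_law P (blahut_kernel d lam Q))
        (\<lambda>z. gibbs_density Q (fst z) (snd z) / output_density Q (snd z))"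
proof -
  interpret Q: prob_space Q using Q by (rule prob_algebra_prob_space)
  interpret P: prob_space P by (rule P)
  interpret PQ: pair_prob_space P Q ..
  have Q'_eq: "output_law P (blahut_kernel d lam Q) = density Q (output_density Q)"
    unfolding output_law_def by (rule bind_blahut_kernel_eq_density[OF Q])
  have W: "output_density Q \<in> borel_measurable Q" by (rule measurable_output_density[OF Q])
  have "P \<Otimes>\<^sub>M density Q (output_density Q) = density P (\<lambda>_. 1) \<Otimes>\<^sub>M density Q (output_density Q)"
    by (simp add: density_1)
  also have "\<dots> = density (P \<Otimes>\<^sub>M Q) (\<lambda>z. output_density Q (snd z))"
  proof -
    interpret Q': prob_space "density Q (output_density Q)"
      using bind_blahut_kernel_in_prob_algebra[OF Q]
      by (simp add: bind_blahut_kernel_eq_density[OF Q] space_prob_algebra)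
    show ?thesis
      using W by (subst pair_measure_density)
        (auto simp: Q.sigma_finite_measure_axioms Q'.sigma_finite_measure_axioms case_prod_beta')
  qed
  finally have PQ'_eq: "P \<Otimes>\<^sub>M output_law P (blahut_kernel d lam Q)
      = density (P \<Otimes>\<^sub>M Q) (\<lambda>z. output_density Q (snd z))"
    unfolding Q'_eq .
  have "AE z in P \<Otimes>\<^sub>M Q. output_density Q (snd z) < \<infinity>"
    by (rule PQ.AE_pair_measure) (use output_density_finite_AE[OF Q] W in \<open>simp_all, measurable\<close>)
  then show ?thesis
    unfolding joint_law_blahut_kernel[OF Q] PQ'_eq using W measurable_gibbs_density[OF Q]
    by (intro density_eq_density_divide)
      (auto simp: space_pair_measure output_density_pos[OF Q])
qed

end

lemma enn2real_divide:
  fixes a b :: ennreal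
  assumes "0 < enn2real a" "0 < enn2real b"
  shows "enn2real (a / b) = enn2real a / enn2real b"
  using assms by (cases a; cases b) (auto simp: divide_ennreal)

lemma ennreal_ln_output_identity:
  fixes w S L :: real
  assumes w: "0 < w" and S: "0 < S" "S \<le> 1" and L: "0 \<le> L"
  defines "k \<equiv> exp (- L) / S / w"
  shows "ennreal (ln k) + ennreal L + ennreal (ln w) = ennreal (- ln k) + ennreal (- ln S) + ennreal (- ln w)"
proof -
  have "ln k = - L - ln S - ln w"
    using w S by (simp add: k_def ln_div ln_mult)
  then have "max (ln k) 0 + max L 0 + max (ln w) 0 = max (- ln k) 0 + max (- ln S) 0 + max (- ln w) 0"
    using S L by (simp add: max_def)
  then show ?thesis
    unfolding ennreal_add_ennreal by (simp del: ennreal_plus)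
qed

context blahut
begin

lemma mutual_info_blahut_kernel_le:
  assumes Q: "Q \<in> space (prob_algebra MY)"
  shows "mutual_info P MY (blahut_kernel d lam Q) + ereal lam * exp_distortion P (blahut_kernel d lam Q) d
    \<le> enn2ereal (blahut_value Q)"
proof -
  interpret Q: prob_space Q using Q by (rule prob_algebra_prob_space)
  interpret P: prob_space P by (rule P)
  have sQ: "sets Q = sets MY" using Q by (rule prob_algebra_sets)
  define G where "G = blahut_kernel d lam Q"
  have G: "G \<in> P \<rightarrow>\<^sub>M prob_algebra MY" unfolding G_def by (rule measurable_blahut_kernel[OF Q])
  define Q' where "Q' = output_law P G"
  define J where "J = joint_law P MY G"
  define W where "W = output_density Q"
  define k where "k z = gibbs_density Q (fst z) (snd z) / W (snd z)" for z
  have Q'_eq: "Q' = density Q W"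
    unfolding Q'_def output_law_def G_def W_def by (rule bind_blahut_kernel_eq_density[OF Q])
  have Q': "prob_space Q'" "sets Q' = sets MY"
    using output_law_in_prob_algebra[OF P G] unfolding Q'_def by (auto simp: space_prob_algebra)
  have sJ: "sets J = sets (P \<Otimes>\<^sub>M MY)"
    using joint_law_in_prob_algebra[OF P G] unfolding J_def by (simp add: space_prob_algebra)
  have PQ': "prob_space (P \<Otimes>\<^sub>M Q')" by (rule prob_space_pair[OF P Q'(1)])
  interpret PQ': prob_space "P \<Otimes>\<^sub>M Q'" by (rule PQ')
  have J_eq: "J = density (P \<Otimes>\<^sub>M Q') k"
    unfolding J_def Q'_def G_def k_def W_def by (rule joint_law_blahut_kernel_eq_density_output[OF Q])
  have W[measurable]: "W \<in> borel_measurable MY"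
    using measurable_output_density[OF Q] unfolding W_def by (simp add: measurable_cong_sets[OF sQ refl])
  have k: "k \<in> borel_measurable (P \<Otimes>\<^sub>M Q')"
    using measurable_gibbs_density[OF Q] unfolding k_def
    by (simp add: measurable_cong_sets[OF sets_pair_measure_cong[OF refl sQ] refl]
      measurable_cong_sets[OF sets_pair_measure_cong[OF refl Q'(2)] refl])
  have [measurable]: "k \<in> borel_measurable J"
    using k by (simp add: J_eq)
  have [measurable]: "fst \<in> J \<rightarrow>\<^sub>M P" "snd \<in> J \<rightarrow>\<^sub>M MY"
    by (simp_all add: measurable_cong_sets[OF sJ refl])
  have [measurable]: "blahut_sigma d lam Q \<in> borel_measurable P" by (rule measurable_blahut_sigma[OF Q])
  have [measurable]: "(\<lambda>z. d (fst z) (snd z)) \<in> borel_measurable J"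
    using d_measurable by (simp add: measurable_cong_sets[OF sJ refl] case_prod_beta')
  define AI where "AI = (\<integral>\<^sup>+ z. ln_pos (k z) \<partial>J)"
  define BI where "BI = (\<integral>\<^sup>+ z. ln_neg (k z) \<partial>J)"
  define Xp where "Xp = (\<integral>\<^sup>+ y. ln_pos (W y) \<partial>Q')"
  define Xm where "Xm = (\<integral>\<^sup>+ y. ln_neg (W y) \<partial>Q')"
  define Ed where "Ed = (\<integral>\<^sup>+ z. ennreal (d (fst z) (snd z)) \<partial>J)"
  have mutual_info: "mutual_info P MY G = enn2ereal AI - enn2ereal BI"
    unfolding mutual_info_def J_def[symmetric] Q'_def[symmetric] AI_def BI_def J_eq
    by (rule rel_entropy_density[OF PQ'.sigma_finite_measure_axioms k])
  have exp_distortion: "exp_distortion P G d = enn2ereal Ed"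
    unfolding Ed_def J_def by (rule exp_distortion_joint_law[OF G d_measurable])
  have WQ: "W \<in> borel_measurable Q" using W by (simp add: measurable_cong_sets[OF sQ refl])
  have "BI \<le> 1" unfolding BI_def J_eq by (rule nn_integral_ln_neg_density_le_1[OF PQ' k])
  moreover have "Xm \<le> 1" unfolding Xm_def Q'_eq by (rule nn_integral_ln_neg_density_le_1[OF Q.prob_space_axioms WQ])
  moreover have "Xm \<le> Xp" unfolding Xm_def Xp_def Q'_eq
    by (rule nn_integral_ln_neg_le_ln_pos[OF Q.prob_space_axioms WQ]) (use Q'(1) Q'_eq in simp)
  moreover have "AI + ennreal lam * Ed + Xp = BI + blahut_value Q + Xm"
  proof -
    have "AE y in Q'. 0 < enn2real (W y)"
      unfolding Q'_eq using output_density_finite_AE[OF Q] WQ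
      by (subst AE_density) (auto elim!: AE_mp simp: W_def output_density_pos[OF Q] enn2real_positive_iff less_top)
    then have "AE z in J. 0 < enn2real (W (snd z))"
      using W unfolding J_def Q'_def by (intro AE_joint_law_snd[OF P G]) simp_all
    then have "AE z in J. ln_pos (k z) + ennreal (lam * d (fst z) (snd z)) + ln_pos (W (snd z))
        = ln_neg (k z) + ennreal (- ln (blahut_sigma d lam Q (fst z))) + ln_neg (W (snd z))"
      using AE_space
    proof eventually_elim
      case (elim z)
      then have "fst z \<in> space P" using sets_eq_imp_space_eq[OF sJ] by (auto simp: space_pair_measure)
      then have S: "0 < blahut_sigma d lam Q (fst z)" "blahut_sigma d lam Q (fst z) \<le> 1"
        using blahut_sigma_bounds[OF Q] by auto
      then have "enn2real (k z) = exp (- (lam * d (fst z) (snd z))) / blahut_sigma d lam Q (fst z)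
          / enn2real (W (snd z))"
        unfolding k_def using elim(1) by (simp add: enn2real_divide gibbs_density_def)
      then show ?case
        using ennreal_ln_output_identity[OF elim(1) S lam_d_nonneg] by (simp add: ln_pos_def ln_neg_def)
    qed
    then have "(\<integral>\<^sup>+ z. ln_pos (k z) + ennreal lam * ennreal (d (fst z) (snd z)) + ln_pos (W (snd z)) \<partial>J)
        = (\<integral>\<^sup>+ z. ln_neg (k z) + ennreal (- ln (blahut_sigma d lam Q (fst z))) + ln_neg (W (snd z)) \<partial>J)"
      using lam_pos d_nonneg by (intro nn_integral_cong_AE) (auto elim!: AE_mp simp: ennreal_mult)
    moreover have "(\<integral>\<^sup>+ z. ln_pos (W (snd z)) \<partial>J) = Xp" "(\<integral>\<^sup>+ z. ln_neg (W (snd z)) \<partial>J) = Xm"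
      unfolding Xp_def Xm_def J_def Q'_def by (rule nn_integral_joint_law_snd[OF G]; simp)+
    moreover have "(\<integral>\<^sup>+ z. ennreal (- ln (blahut_sigma d lam Q (fst z))) \<partial>J) = blahut_value Q"
      unfolding J_def blahut_value_def by (rule nn_integral_joint_law_fst[OF G]) simp
    ultimately show ?thesis
      unfolding AI_def BI_def Ed_def by (simp add: nn_integral_add nn_integral_cmult)
  qed
  ultimately have "(enn2ereal AI - enn2ereal BI) + enn2ereal (ennreal lam * Ed) \<le> enn2ereal (blahut_value Q)"
    by (intro enn2ereal_diff_add_le) (auto simp: top_unique)
  then show ?thesis
    unfolding G_def[symmetric] mutual_info exp_distortion
    using lam_pos by (simp add: times_ennreal.rep_eq enn2ereal_ennreal)
qed

end

lemma ennreal_three_point_ineq: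
  fixes t \<eta> w S L :: real
  assumes t: "0 < t" and \<eta>: "0 < \<eta>" and w: "0 < w" and S: "0 < S" "S \<le> 1" and L: "0 \<le> L"
  shows "ennreal (- ln S) + ennreal (ln (\<eta> / w)) + ennreal (- ln t) + ennreal (- ln \<eta>) + 1
    \<le> ennreal (ln t) + ennreal L + ennreal (ln \<eta>) + ennreal (- ln (\<eta> / w))
      + ennreal (exp (- L) / (S * w) / t)"
proof -
  define u where "u = exp (- L) / (S * w) / t"
  have u: "0 < u" using t S w by (simp add: u_def)
  have "ln u = - L - ln S - ln w - ln t"
    using t S w by (simp add: u_def ln_div ln_mult)
  moreover have "ln (\<eta> / w) = ln \<eta> - ln w" using \<eta> w by (simp add: ln_div)
  ultimately have core: "- ln S + ln (\<eta> / w) + 1 \<le> ln t + L + ln \<eta> + u"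
    using ln_le_minus_one[OF u] by linarith
  have split: "max x 0 = x + max (- x) 0" for x :: real by (simp add: max_def)
  obtain m1 m2 m3 where
    m: "max (- ln t) 0 = m1" "max (- ln \<eta>) 0 = m2" "max (- ln (\<eta> / w)) 0 = m3" by blast
  have c: "max (- ln S) 0 = - ln S" "max 1 0 = (1::real)" "max L 0 = L" "max u 0 = u"
    using S L u by auto
  have lift: "max c1 0 + max c2 0 + max c3 0 + max c4 0 + max c5 0 \<le> max a1 0 + max a2 0 + max a3 0 + max a4 0 + max a5 0
    \<Longrightarrow> ennreal c1 + ennreal c2 + ennreal c3 + ennreal c4 + ennreal c5
      \<le> ennreal a1 + ennreal a2 + ennreal a3 + ennreal a4 + ennreal a5" for c1 c2 c3 c4 c5 a1 a2 a3 a4 a5 :: real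
    unfolding ennreal_add_ennreal by (simp add: ennreal_leI del: ennreal_plus)
  have "max (- ln S) 0 + max (ln (\<eta> / w)) 0 + max (- ln t) 0 + max (- ln \<eta>) 0 + max 1 0
      \<le> max (ln t) 0 + max L 0 + max (ln \<eta>) 0 + max (- ln (\<eta> / w)) 0 + max u 0"
    unfolding split[of "ln t"] split[of "ln \<eta>"] split[of "ln (\<eta> / w)"] m c
    using core by linarith
  then show ?thesis
    using lift unfolding u_def[symmetric] by (metis ennreal_1)
qed

context blahut
begin

lemma nn_integral_gibbs_ratio_le_1:
  assumes Q: "Q \<in> space (prob_algebra MY)" and R: "R \<in> space (prob_algebra MY)"
  shows "(\<integral>\<^sup>+ z. ennreal (exp (- lam * d (fst z) (snd z))
      / (blahut_sigma d lam Q (fst z) * enn2real (output_density Q (snd z)))) \<partial>(P \<Otimes>\<^sub>M R)) \<le> 1"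
proof -
  interpret R: prob_space R using R by (rule prob_algebra_prob_space)
  interpret P: prob_space P by (rule P)
  interpret PR: pair_prob_space P R ..
  have sR: "sets R = sets MY" using R by (rule prob_algebra_sets)
  note [measurable] = measurable_d_pair[OF sR] measurable_blahut_sigma[OF Q]
  have [measurable]: "output_density Q \<in> borel_measurable R"
    using measurable_output_density[OF Q]
    by (simp add: measurable_cong_sets[OF prob_algebra_sets[OF Q] refl] measurable_cong_sets[OF sR refl])
  have "(\<lambda>z. ennreal (exp (- lam * d (fst z) (snd z))
      / (blahut_sigma d lam Q (fst z) * enn2real (output_density Q (snd z))))) \<in> borel_measurable (P \<Otimes>\<^sub>M R)"
    by measurable
  from PR.nn_integral_snd[OF this]
  have "(\<integral>\<^sup>+ z. ennreal (exp (- lam * d (fst z) (snd z))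
      / (blahut_sigma d lam Q (fst z) * enn2real (output_density Q (snd z)))) \<partial>(P \<Otimes>\<^sub>M R))
    = (\<integral>\<^sup>+ y. \<integral>\<^sup>+ x. ennreal (exp (- lam * d x y)
      / (blahut_sigma d lam Q x * enn2real (output_density Q y))) \<partial>P \<partial>R)"
    by simp
  also have "\<dots> \<le> (\<integral>\<^sup>+ y. 1 \<partial>R)"
  proof (rule nn_integral_mono)
    fix y assume y: "y \<in> space R"
    then have yQ: "y \<in> space Q"
      using sets_eq_imp_space_eq[OF sR] sets_eq_imp_space_eq[OF prob_algebra_sets[OF Q]] by simp
    have "(\<integral>\<^sup>+ x. ennreal (exp (- lam * d x y) / (blahut_sigma d lam Q x * enn2real (output_density Q y))) \<partial>P)
        = (\<integral>\<^sup>+ x. gibbs_density Q x y * ennreal (1 / enn2real (output_density Q y)) \<partial>P)"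
    proof (rule nn_integral_cong)
      fix x assume x: "x \<in> space P"
      have "exp (- lam * d x y) / (blahut_sigma d lam Q x * enn2real (output_density Q y))
          = exp (- lam * d x y) / blahut_sigma d lam Q x * (1 / enn2real (output_density Q y))"
        by simp
      then show "ennreal (exp (- lam * d x y) / (blahut_sigma d lam Q x * enn2real (output_density Q y)))
          = gibbs_density Q x y * ennreal (1 / enn2real (output_density Q y))"
        unfolding gibbs_density_def using blahut_sigma_bounds(1)[OF Q x]
        by (simp add: ennreal_mult[symmetric] del: ennreal_mult)
    qed
    also have "\<dots> = output_density Q y * ennreal (1 / enn2real (output_density Q y))"
      unfolding output_density_def by (rule nn_integral_multc[OF measurable_gibbs_density_fst[OF Q yQ]])
    also have "\<dots> \<le> 1"
      by (cases "output_density Q y"; cases "output_density Q y = 0") (auto simp: ennreal_mult[symmetric])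
    finally show "(\<integral>\<^sup>+ x. ennreal (exp (- lam * d x y)
        / (blahut_sigma d lam Q x * enn2real (output_density Q y))) \<partial>P) \<le> 1" .
  qed
  also have "\<dots> = 1" using R.emeasure_space_1 by simp
  finally show ?thesis .
qed

end

context blahut
begin

lemma AE_joint_law_output_density_pos:
  assumes Q: "Q \<in> space (prob_algebra MY)" and K: "K \<in> P \<rightarrow>\<^sub>M prob_algebra MY"
    and h: "h \<in> borel_measurable MY" and PK_eq: "output_law P K = density Q h"
  shows "AE z in joint_law P MY K. 0 < enn2real (h (snd z)) \<and> 0 < enn2real (output_density Q (snd z))"
proof -
  have sQ: "sets Q = sets MY" using Q by (rule prob_algebra_sets)
  have PK: "output_law P K \<in> space (prob_algebra MY)" by (rule output_law_in_prob_algebra[OF P K])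
  have hQ: "h \<in> borel_measurable Q" using h by (simp add: measurable_cong_sets[OF sQ refl])
  have "AE y in output_law P K. 0 < enn2real (h y)"
    using AE_density_enn2real_pos[OF hQ] PK prob_algebra_prob_space unfolding PK_eq by blast
  moreover have "AE y in output_law P K. output_density Q y < \<infinity>"
    unfolding PK_eq using output_density_finite_AE[OF Q] hQ by (subst AE_density) (auto elim: AE_mp)
  ultimately have "AE y in output_law P K. 0 < enn2real (h y) \<and> 0 < enn2real (output_density Q y)"
    using AE_space
    by eventually_elim
      (use output_density_pos[OF Q] sets_eq_imp_space_eq[OF prob_algebra_sets[OF PK]]
        sets_eq_imp_space_eq[OF sQ] in \<open>auto simp: enn2real_positive_iff less_top\<close>)
  then show ?thesis
    using h measurable_output_density[OF Q]
    by (intro AE_joint_law_snd[OF P K]) (simp_all add: measurable_cong_sets[OF sQ refl])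
qed

text \<open>The three-point inequality with each relative entropy split into the integrals of
  \<open>ln_pos\<close> and \<open>ln_neg\<close> of its density: \<open>f = dP\<^sub>X\<^sub>Y / d(P \<otimes> P\<^sub>K)\<close>,
  \<open>h = dP\<^sub>K / dQ\<close> and \<open>h' = dP\<^sub>K / dQ'\<close>. It is Gibbs' inequality on \<open>P \<otimes> P\<^sub>K\<close> with the
  sub-probability density of \<open>nn_integral_gibbs_ratio_le_1\<close>.\<close>
lemma three_point_nn_integral_le:
  assumes Q: "Q \<in> space (prob_algebra MY)" and K: "K \<in> P \<rightarrow>\<^sub>M prob_algebra MY"
    and f: "f \<in> borel_measurable (P \<Otimes>\<^sub>M output_law P K)"
    and J_eq: "joint_law P MY K = density (P \<Otimes>\<^sub>M output_law P K) f"
    and h: "h \<in> borel_measurable MY" and PK_eq: "output_law P K = density Q h"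
  defines "h' \<equiv> \<lambda>y. h y / output_density Q y"
  shows "blahut_value Q + (\<integral>\<^sup>+ y. ln_pos (h' y) \<partial>output_law P K) + (\<integral>\<^sup>+ z. ln_neg (f z) \<partial>joint_law P MY K)
      + (\<integral>\<^sup>+ y. ln_neg (h y) \<partial>output_law P K)
    \<le> (\<integral>\<^sup>+ z. ln_pos (f z) \<partial>joint_law P MY K)
      + ennreal lam * (\<integral>\<^sup>+ z. ennreal (d (fst z) (snd z)) \<partial>joint_law P MY K)
      + (\<integral>\<^sup>+ y. ln_pos (h y) \<partial>output_law P K) + (\<integral>\<^sup>+ y. ln_neg (h' y) \<partial>output_law P K)"
proof -
  interpret P: prob_space P by (rule P)
  define PK where "PK = output_law P K"
  define J where "J = joint_law P MY K"
  define W where "W = output_density Q"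
  have sQ: "sets Q = sets MY" using Q by (rule prob_algebra_sets)
  have PK: "PK \<in> space (prob_algebra MY)"
    unfolding PK_def by (rule output_law_in_prob_algebra[OF P K])
  have sPK: "sets PK = sets MY" using PK by (rule prob_algebra_sets)
  have J: "prob_space J" and sJ: "sets J = sets (P \<Otimes>\<^sub>M MY)"
    using joint_law_in_prob_algebra[OF P K] unfolding J_def by (auto simp: space_prob_algebra)
  have J_eq': "J = density (P \<Otimes>\<^sub>M PK) f" unfolding J_def PK_def by (rule J_eq)
  have W[measurable]: "W \<in> borel_measurable MY"
    using measurable_output_density[OF Q] unfolding W_def by (simp add: measurable_cong_sets[OF sQ refl])
  have [measurable]: "f \<in> borel_measurable J"
    using f unfolding J_eq' PK_def by simp
  have [measurable]: "fst \<in> J \<rightarrow>\<^sub>M P" "snd \<in> J \<rightarrow>\<^sub>M MY"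
    by (simp_all add: measurable_cong_sets[OF sJ refl])
  have [measurable]: "blahut_sigma d lam Q \<in> borel_measurable P" by (rule measurable_blahut_sigma[OF Q])
  have [measurable]: "(\<lambda>z. d (fst z) (snd z)) \<in> borel_measurable J"
    using d_measurable by (simp add: measurable_cong_sets[OF sJ refl] case_prod_beta')
  note [measurable] = h
  define \<phi> where "\<phi> z = exp (- lam * d (fst z) (snd z)) / (blahut_sigma d lam Q (fst z) * enn2real (W (snd z)))"
    for z
  define a where "a z = ln_pos (f z) + ennreal (lam * d (fst z) (snd z)) + ln_pos (h (snd z))
    + ln_neg (h' (snd z))" for z
  define b where "b z = ennreal (- ln (blahut_sigma d lam Q (fst z))) + ln_pos (h' (snd z)) + ln_neg (f z)
    + ln_neg (h (snd z))" for z
  have pos_snd: "AE z in J. 0 < enn2real (h (snd z)) \<and> 0 < enn2real (W (snd z))"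
    unfolding J_def W_def by (rule AE_joint_law_output_density_pos[OF Q K h PK_eq])
  have pos_f: "AE z in J. 0 < enn2real (f z)"
    using AE_density_enn2real_pos[OF f] J unfolding J_eq' PK_def by blast
  have pointwise: "AE z in J. b z + 1 \<le> a z + ennreal (\<phi> z / enn2real (f z))"
    using pos_f pos_snd AE_space
  proof eventually_elim
    case (elim z)
    then have "fst z \<in> space P" using sets_eq_imp_space_eq[OF sJ] by (auto simp: space_pair_measure)
    then have S: "0 < blahut_sigma d lam Q (fst z)" "blahut_sigma d lam Q (fst z) \<le> 1"
      using blahut_sigma_bounds[OF Q] by auto
    have "enn2real (h' (snd z)) = enn2real (h (snd z)) / enn2real (W (snd z))"
      unfolding h'_def W_def[symmetric] using elim(2) by (intro enn2real_divide) auto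
    moreover have "\<phi> z / enn2real (f z) = exp (- (lam * d (fst z) (snd z)))
        / (blahut_sigma d lam Q (fst z) * enn2real (W (snd z))) / enn2real (f z)"
      by (simp add: \<phi>_def)
    ultimately show ?case
      using ennreal_three_point_ineq[OF elim(1) conjunct1[OF elim(2)] conjunct2[OF elim(2)] S lam_d_nonneg]
      unfolding a_def b_def ln_pos_def ln_neg_def by simp
  qed
  have "(\<integral>\<^sup>+ z. b z \<partial>J) \<le> (\<integral>\<^sup>+ z. a z \<partial>J)"
    unfolding J_eq'
  proof (rule gibbs_nn_integral_le[OF f[folded PK_def]])
    show "prob_space (density (P \<Otimes>\<^sub>M PK) f)" using J J_eq' by simp
    have [measurable]: "W \<in> borel_measurable PK" using W by (simp add: measurable_cong_sets[OF sPK refl])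
    note [measurable] = measurable_d_pair[OF sPK]
    show "\<phi> \<in> borel_measurable (P \<Otimes>\<^sub>M PK)" unfolding \<phi>_def by measurable
    show "0 \<le> \<phi> z" for z
      unfolding \<phi>_def blahut_sigma_def by (auto intro!: divide_nonneg_nonneg integral_nonneg)
    show "(\<integral>\<^sup>+ z. ennreal (\<phi> z) \<partial>(P \<Otimes>\<^sub>M PK)) \<le> 1"
      unfolding \<phi>_def W_def by (rule nn_integral_gibbs_ratio_le_1[OF Q PK])
    have [measurable]: "h \<in> borel_measurable PK" using h by (simp add: measurable_cong_sets[OF sPK refl])
    have [measurable]: "f \<in> borel_measurable (P \<Otimes>\<^sub>M PK)" by (rule f[folded PK_def])
    show "a \<in> borel_measurable (P \<Otimes>\<^sub>M PK)" "b \<in> borel_measurable (P \<Otimes>\<^sub>M PK)"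
      unfolding a_def b_def h'_def W_def[symmetric] by measurable
    show "AE z in density (P \<Otimes>\<^sub>M PK) f. b z + 1 \<le> a z + ennreal (\<phi> z / enn2real (f z))"
      using pointwise unfolding J_eq' .
  qed
  moreover have "(\<integral>\<^sup>+ z. b z \<partial>J) = blahut_value Q + (\<integral>\<^sup>+ y. ln_pos (h' y) \<partial>PK) + (\<integral>\<^sup>+ z. ln_neg (f z) \<partial>J)
      + (\<integral>\<^sup>+ y. ln_neg (h y) \<partial>PK)"
  proof -
    have "(\<integral>\<^sup>+ z. b z \<partial>J) = (\<integral>\<^sup>+ z. ennreal (- ln (blahut_sigma d lam Q (fst z))) \<partial>J)
        + (\<integral>\<^sup>+ z. ln_pos (h' (snd z)) \<partial>J) + (\<integral>\<^sup>+ z. ln_neg (f z) \<partial>J) + (\<integral>\<^sup>+ z. ln_neg (h (snd z)) \<partial>J)"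
      unfolding b_def h'_def W_def[symmetric] by (simp add: nn_integral_add)
    moreover have "(\<integral>\<^sup>+ z. ennreal (- ln (blahut_sigma d lam Q (fst z))) \<partial>J) = blahut_value Q"
      unfolding J_def blahut_value_def by (rule nn_integral_joint_law_fst[OF K]) simp
    moreover have "(\<integral>\<^sup>+ z. ln_pos (h' (snd z)) \<partial>J) = (\<integral>\<^sup>+ y. ln_pos (h' y) \<partial>PK)"
      "(\<integral>\<^sup>+ z. ln_neg (h (snd z)) \<partial>J) = (\<integral>\<^sup>+ y. ln_neg (h y) \<partial>PK)"
      unfolding J_def PK_def h'_def W_def[symmetric] by (rule nn_integral_joint_law_snd[OF K]; simp)+
    ultimately show ?thesis by simp
  qed
  moreover have "(\<integral>\<^sup>+ z. a z \<partial>J) = (\<integral>\<^sup>+ z. ln_pos (f z) \<partial>J)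
      + ennreal lam * (\<integral>\<^sup>+ z. ennreal (d (fst z) (snd z)) \<partial>J)
      + (\<integral>\<^sup>+ y. ln_pos (h y) \<partial>PK) + (\<integral>\<^sup>+ y. ln_neg (h' y) \<partial>PK)"
  proof -
    have "(\<integral>\<^sup>+ z. a z \<partial>J) = (\<integral>\<^sup>+ z. ln_pos (f z) \<partial>J)
        + (\<integral>\<^sup>+ z. ennreal lam * ennreal (d (fst z) (snd z)) \<partial>J)
        + (\<integral>\<^sup>+ z. ln_pos (h (snd z)) \<partial>J) + (\<integral>\<^sup>+ z. ln_neg (h' (snd z)) \<partial>J)"
      unfolding a_def h'_def W_def[symmetric] using lam_pos d_nonneg
      by (simp add: nn_integral_add ennreal_mult)
    moreover have "(\<integral>\<^sup>+ z. ennreal lam * ennreal (d (fst z) (snd z)) \<partial>J)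
        = ennreal lam * (\<integral>\<^sup>+ z. ennreal (d (fst z) (snd z)) \<partial>J)"
      by (rule nn_integral_cmult) measurable
    moreover have "(\<integral>\<^sup>+ z. ln_pos (h (snd z)) \<partial>J) = (\<integral>\<^sup>+ y. ln_pos (h y) \<partial>PK)"
      "(\<integral>\<^sup>+ z. ln_neg (h' (snd z)) \<partial>J) = (\<integral>\<^sup>+ y. ln_neg (h' y) \<partial>PK)"
      unfolding J_def PK_def h'_def W_def[symmetric] by (rule nn_integral_joint_law_snd[OF K]; simp)+
    ultimately show ?thesis by simp
  qed
  ultimately show ?thesis unfolding J_def PK_def by simp
qed

lemma blahut_value_add_rel_entropy_le:
  assumes Q: "Q \<in> space (prob_algebra MY)" and K: "K \<in> P \<rightarrow>\<^sub>M prob_algebra MY"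
  shows "enn2ereal (blahut_value Q) + rel_entropy (output_law P K) (bind P (blahut_kernel d lam Q))
     \<le> mutual_info P MY K + ereal lam * exp_distortion P K d + rel_entropy (output_law P K) Q"
proof -
  interpret Q: prob_space Q using Q by (rule prob_algebra_prob_space)
  have sQ: "sets Q = sets MY" using Q by (rule prob_algebra_sets)
  define PK where "PK = output_law P K"
  define J where "J = joint_law P MY K"
  define Q' where "Q' = bind P (blahut_kernel d lam Q)"
  have PK: "prob_space PK" "sets PK = sets MY"
    using output_law_in_prob_algebra[OF P K] unfolding PK_def by (auto simp: space_prob_algebra)
  interpret PK: prob_space PK by (rule PK(1))
  have J: "prob_space J" "sets J = sets (P \<Otimes>\<^sub>M PK)"
    using joint_law_in_prob_algebra[OF P K] sets_pair_measure_cong[OF refl PK(2)]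
    unfolding J_def by (auto simp: space_prob_algebra)
  interpret PPK: prob_space "P \<Otimes>\<^sub>M PK" by (rule prob_space_pair[OF P PK(1)])
  have mutual_info: "mutual_info P MY K = rel_entropy J (P \<Otimes>\<^sub>M PK)"
    unfolding mutual_info_def J_def PK_def ..
  show ?thesis
  proof (cases "absolutely_continuous (P \<Otimes>\<^sub>M PK) J \<and> absolutely_continuous Q PK")
    case False
    have "0 \<le> rel_entropy J (P \<Otimes>\<^sub>M PK)"
      by (rule rel_entropy_nonneg[OF PPK.prob_space_axioms J(1) J(2)])
    moreover have "0 \<le> rel_entropy PK Q"
      by (rule rel_entropy_nonneg[OF Q.prob_space_axioms PK(1)]) (simp add: sQ PK(2))
    moreover have "0 \<le> ereal lam * exp_distortion P K d"
      using lam_pos by (simp add: exp_distortion_def)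
    ultimately have top: "mutual_info P MY K + ereal lam * exp_distortion P K d
        + rel_entropy (output_law P K) Q = \<infinity>"
      using False unfolding mutual_info PK_def[symmetric] by (auto simp: rel_entropy_def)
    show ?thesis unfolding top by simp
  next
    case True
    define f where "f = RN_deriv (P \<Otimes>\<^sub>M PK) J"
    define h where "h = RN_deriv Q PK"
    define W where "W = output_density Q"
    define h' where "h' y = h y / W y" for y
    have f: "f \<in> borel_measurable (P \<Otimes>\<^sub>M PK)" unfolding f_def by simp
    have J_eq: "J = density (P \<Otimes>\<^sub>M PK) f"
      unfolding f_def using PPK.density_RN_deriv[OF conjunct1[OF True] J(2)] by simp
    have hQ: "h \<in> borel_measurable Q" unfolding h_def by simp
    have h: "h \<in> borel_measurable MY" using hQ by (simp add: measurable_cong_sets[OF sQ refl])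
    have PK_eq: "PK = density Q h"
      unfolding h_def using Q.density_RN_deriv[OF conjunct2[OF True]] PK(2) sQ by simp
    have Q'_eq: "Q' = density Q W"
      unfolding Q'_def W_def by (rule bind_blahut_kernel_eq_density[OF Q])
    have Q': "prob_space Q'" "sets Q' = sets MY"
      using bind_blahut_kernel_in_prob_algebra[OF Q] unfolding Q'_def by (auto simp: space_prob_algebra)
    interpret Q': prob_space Q' by (rule Q'(1))
    have h'Q': "h' \<in> borel_measurable Q'"
      using h measurable_output_density[OF Q] unfolding h'_def W_def
      by (simp add: measurable_cong_sets[OF Q'(2) refl] measurable_cong_sets[OF sQ refl])
    have PK_eq': "PK = density Q' h'"
      unfolding PK_eq Q'_eq h'_def W_def
      by (rule density_eq_density_divide[OF measurable_output_density[OF Q] hQ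
            output_density_pos[OF Q] output_density_finite_AE[OF Q]])
    define AI where "AI = (\<integral>\<^sup>+ z. ln_pos (f z) \<partial>J)"
    define BI where "BI = (\<integral>\<^sup>+ z. ln_neg (f z) \<partial>J)"
    define AQ where "AQ = (\<integral>\<^sup>+ y. ln_pos (h y) \<partial>PK)"
    define BQ where "BQ = (\<integral>\<^sup>+ y. ln_neg (h y) \<partial>PK)"
    define A' where "A' = (\<integral>\<^sup>+ y. ln_pos (h' y) \<partial>PK)"
    define B' where "B' = (\<integral>\<^sup>+ y. ln_neg (h' y) \<partial>PK)"
    define Ed where "Ed = (\<integral>\<^sup>+ z. ennreal (d (fst z) (snd z)) \<partial>J)"
    have "rel_entropy J (P \<Otimes>\<^sub>M PK) = enn2ereal AI - enn2ereal BI"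
      unfolding AI_def BI_def J_eq by (rule rel_entropy_density[OF PPK.sigma_finite_measure_axioms f])
    moreover have "rel_entropy PK Q = enn2ereal AQ - enn2ereal BQ"
      unfolding AQ_def BQ_def PK_eq by (rule rel_entropy_density[OF Q.sigma_finite_measure_axioms hQ])
    moreover have "rel_entropy PK Q' = enn2ereal A' - enn2ereal B'"
      unfolding A'_def B'_def PK_eq' by (rule rel_entropy_density[OF Q'.sigma_finite_measure_axioms h'Q'])
    moreover have "exp_distortion P K d = enn2ereal Ed"
      unfolding Ed_def J_def by (rule exp_distortion_joint_law[OF K d_measurable])
    moreover have "enn2ereal (blahut_value Q) + (enn2ereal A' - enn2ereal B')
        \<le> (enn2ereal AI - enn2ereal BI) + enn2ereal (ennreal lam * Ed) + (enn2ereal AQ - enn2ereal BQ)"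
    proof (rule enn2ereal_diff_le_diff_add_diff)
      show "B' \<noteq> \<infinity>" "BI \<noteq> \<infinity>" "BQ \<noteq> \<infinity>"
        using nn_integral_ln_neg_density_le_1[OF Q'.prob_space_axioms h'Q']
          nn_integral_ln_neg_density_le_1[OF PPK.prob_space_axioms f]
          nn_integral_ln_neg_density_le_1[OF Q.prob_space_axioms hQ]
        unfolding B'_def BI_def BQ_def PK_eq'[symmetric] J_eq[symmetric] PK_eq[symmetric]
        by (auto simp: top_unique)
      show "blahut_value Q + A' + BI + BQ \<le> AI + ennreal lam * Ed + AQ + B'"
        using three_point_nn_integral_le[OF Q K f[unfolded PK_def] J_eq[unfolded J_def PK_def] h
            PK_eq[unfolded PK_def]]
        unfolding AI_def BI_def AQ_def BQ_def A'_def B'_def Ed_def h'_def W_def J_def PK_def .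
    qed
    ultimately show ?thesis
      unfolding mutual_info Q'_def[symmetric] PK_def[symmetric] using lam_pos
      by (simp add: times_ennreal.rep_eq enn2ereal_ennreal)
  qed
qed

end

context blahut
begin

lemma rd_F_le_blahut_value:
  assumes Q: "Q \<in> space (prob_algebra MY)"
  shows "rd_F P MY d lam \<le> enn2ereal (blahut_value Q)"
  unfolding rd_F_def
  by (rule INF_lower2[OF measurable_blahut_kernel[OF Q]]) (rule mutual_info_blahut_kernel_le[OF Q])

lemma blahut_value_bind_le:
  assumes Q: "Q \<in> space (prob_algebra MY)"
  shows "enn2ereal (blahut_value (bind P (blahut_kernel d lam Q))) \<le> enn2ereal (blahut_value Q)"
proof -
  define Q' where "Q' = bind P (blahut_kernel d lam Q)"
  have Q': "Q' \<in> space (prob_algebra MY)"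
    unfolding Q'_def by (rule bind_blahut_kernel_in_prob_algebra[OF Q])
  have Q'_out: "output_law P (blahut_kernel d lam Q) = Q'"
    unfolding Q'_def output_law_def ..
  have "enn2ereal (blahut_value Q') \<le> enn2ereal (blahut_value Q') + rel_entropy Q' (bind P (blahut_kernel d lam Q'))"
    using rel_entropy_nonneg[OF prob_algebra_prob_space[OF bind_blahut_kernel_in_prob_algebra[OF Q']]
        prob_algebra_prob_space[OF Q']]
      prob_algebra_sets[OF Q'] prob_algebra_sets[OF bind_blahut_kernel_in_prob_algebra[OF Q']]
    by (simp add: add_increasing2)
  also have "\<dots> \<le> mutual_info P MY (blahut_kernel d lam Q)
      + ereal lam * exp_distortion P (blahut_kernel d lam Q) d + rel_entropy Q' Q'"
    using blahut_value_add_rel_entropy_le[OF Q' measurable_blahut_kernel[OF Q]] unfolding Q'_out .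
  also have "\<dots> \<le> enn2ereal (blahut_value Q)"
    using mutual_info_blahut_kernel_le[OF Q] rel_entropy_self[OF prob_algebra_prob_space[OF Q']] by simp
  finally show ?thesis unfolding Q'_def .
qed

lemma blahut_value_rate:
  assumes K: "Kstar \<in> P \<rightarrow>\<^sub>M prob_algebra MY"
    and opt: "mutual_info P MY Kstar + ereal lam * exp_distortion P Kstar d = rd_F P MY d lam"
    and Q0: "Q0 \<in> space (prob_algebra MY)" and D0: "rel_entropy (output_law P Kstar) Q0 < \<infinity>"
  defines "\<phi> \<equiv> \<lambda>j. enn2ereal (blahut_value (blahut_out P d lam Q0 j))"
  shows "\<phi> (Suc j) \<le> \<phi> j" and "\<phi> \<longlonglongrightarrow> rd_F P MY d lam"
    and "k \<ge> 1 \<Longrightarrow> \<phi> (k - 1) \<le> rd_F P MY d lam + rel_entropy (output_law P Kstar) Q0 / ereal (real k)"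
proof -
  define Q where "Q j = blahut_out P d lam Q0 j" for j
  define D where "D j = rel_entropy (output_law P Kstar) (Q j)" for j
  have Q: "Q j \<in> space (prob_algebra MY)" for j
    unfolding Q_def by (rule blahut_out_in_prob_algebra[OF Q0])
  show mono: "\<phi> (Suc j) \<le> \<phi> j" for j
    using blahut_value_bind_le[OF Q] by (simp add: \<phi>_def Q_def)
  have step: "\<phi> j + D (Suc j) \<le> rd_F P MY d lam + D j" for j
    using blahut_value_add_rel_entropy_le[OF Q K] unfolding \<phi>_def D_def opt by (simp add: Q_def)
  have lower: "rd_F P MY d lam \<le> \<phi> j" for j
    unfolding \<phi>_def Q_def[symmetric] by (rule rd_F_le_blahut_value[OF Q])
  have D_nonneg: "0 \<le> D j" for j
    unfolding D_def using output_law_in_prob_algebra[OF P K] Q[of j]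
    by (intro rel_entropy_nonneg) (auto simp: space_prob_algebra)
  have D0_eq: "D 0 = rel_entropy (output_law P Kstar) Q0" by (simp add: D_def Q_def)
  have \<phi>_nonneg: "0 \<le> \<phi> j" for j by (simp add: \<phi>_def)
  note rate = ereal_telescoping_rate[of \<phi> D, OF step lower mono \<phi>_nonneg D_nonneg, unfolded D0_eq, OF D0]
  show "\<phi> \<longlonglongrightarrow> rd_F P MY d lam" by (rule rate(2))
  show "k \<ge> 1 \<Longrightarrow> \<phi> (k - 1) \<le> rd_F P MY d lam + rel_entropy (output_law P Kstar) Q0 / ereal (real k)"
    by (rule rate(1))
qed

end

theorem theorem6:
  fixes P :: "'a measure" and MY :: "'b measure"
    and d :: "'a \<Rightarrow> 'b \<Rightarrow> real" and lam :: real
    and Kstar :: "'a \<Rightarrow> 'b measure" and Q0 :: "'b measure"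
  assumes "prob_space P"
    and "\<forall>x\<in>space P. {x} \<in> sets P"
    and "\<forall>y\<in>space MY. {y} \<in> sets MY"
    and "(\<lambda>(x, y). d x y) \<in> borel_measurable (P \<Otimes>\<^sub>M MY)"
    and "\<forall>x y. 0 \<le> d x y"
    and "lam > 0"
    and "Kstar \<in> P \<rightarrow>\<^sub>M prob_algebra MY"
    and "mutual_info P MY Kstar + ereal lam * exp_distortion P Kstar d = rd_F P MY d lam"
    and "Q0 \<in> space (prob_algebra MY)"
    and "rel_entropy (output_law P Kstar) Q0 < \<infinity>"
  shows "(\<forall>k\<ge>1. blahut_F P MY d lam Q0 (Suc k) \<le> blahut_F P MY d lam Q0 k)
    \<and> ((\<lambda>k. blahut_F P MY d lam Q0 (Suc k)) \<longlonglongrightarrow> rd_F P MY d lam)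
    \<and> (\<forall>k\<ge>1. blahut_F P MY d lam Q0 k
              \<le> rd_F P MY d lam + rel_entropy (output_law P Kstar) Q0 / ereal (real k))"
proof -
  interpret blahut P MY d lam
    using assms(5) by (intro blahut.intro[OF assms(1,4) _ assms(6)]) blast
  note F = blahut_F_Suc[OF assms(9)] and rate = blahut_value_rate[OF assms(7-10)]
  show ?thesis
  proof (intro conjI allI impI)
    fix k :: nat assume "1 \<le> k"
    then obtain j where "k = Suc j" by (cases k) auto
    then show "blahut_F P MY d lam Q0 (Suc k) \<le> blahut_F P MY d lam Q0 k"
      using rate(1)[of j] by (simp add: F)
  next
    show "(\<lambda>k. blahut_F P MY d lam Q0 (Suc k)) \<longlonglongrightarrow> rd_F P MY d lam"
      unfolding F by (rule rate(2))
  next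
    fix k :: nat assume k: "1 \<le> k"
    then obtain j where "k = Suc j" by (cases k) auto
    then show "blahut_F P MY d lam Q0 k
        \<le> rd_F P MY d lam + rel_entropy (output_law P Kstar) Q0 / ereal (real k)"
      using rate(3)[OF k] by (simp add: F)
  qed
qed

end
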